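(* Let $\mathbf{p}=(p,s)$ be a finite exponent, let $c=(c_0,c_1)$ be a Whitney parameter and let $k\in\mathbb{Z}$. Then for all $f\in L^0(\mathbb{R}^{1+n}_+)$, \[ \|f\|_{Z^{\mathbf{p}}_c}\simeq_{c,k,\mathbf{p}} \Big(\sum_{Q\in\mathcal{Q}(\mathbb{R}^n)} \ell(Q)^n\big(\ell(Q)^{-s}[|f|^2]^{1/2}_{\overline{Q}^k}\big)^p\Big)^{1/p}, \] where $[|f|^2]^{1/2}_{\overline{Q}^k}:=\big(\iint_{\overline{Q}^k}|f(\tau,\xi)|^2\,\frac{d\tau\,d\xi}{\tau^{1+n}}\big)^{1/2}$ (both sides may be infinite).
   Context: Fix integers $n,N\geq1$; all functions on $\mathbb{R}^{1+n}_+:=(0,\infty)\times\mathbb{R}^n$ are $\mathbb{C}^N$-valued, and $L^0(\mathbb{R}^{1+n}_+)$ denotes measurable functions modulo a.e. equality. A finite exponent is a pair $(p,s)$ with $p\in(0,\infty)$, $s\in\mathbb{R}$; set $i(p,s)=p$, $r(p,s)=s$. A Whitney parameter is a pair $c=(c_0,c_1)\in(0,\infty)\times(3/2,\infty)$; the Whitney region is $\Omega_c(t,x):=(c_1^{-1}t,c_1t)\times B(x,c_0t)$ and $\mathcal{W}_cf(t,x):=\big(|\Omega_c(t,x)|^{-1}\iint_{\Omega_c(t,x)}|f(\tau,\xi)|^2\,d\xi\,d\tau\big)^{1/2}$. With $\kappa^{a}f(t,x):=t^{a}f(t,x)$, define $\|f\|_{Z^{\mathbf{p}}_c}:=\|\mathcal{W}_c(\kappa^{-r(\mathbf{p})}f)\|_{L^{i(\mathbf{p})}(\mathbb{R}^{1+n}_+,\,dx\,dt/t)}$.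 $\mathcal{Q}(\mathbb{R}^n)$ is a system of open dyadic cubes in $\mathbb{R}^n$, $\ell(Q)$ the side length of $Q$, and for $k\in\mathbb{Z}$ the Whitney cube is $\overline{Q}^k:=(2^k\ell(Q),2^{k+1}\ell(Q))\times Q$. *)

theory Defs
  imports "HOL-Analysis.Analysis"
begin

text \<open>Points of the upper half space are pairs (t, x) with t real and x in real^'n;
  functions take values in complex^'m (so N = CARD('m)).\<close>

text \<open>Real power of an extended nonnegative real, for positive exponents:
  infinity stays infinity.\<close>
definition epowr :: "ennreal \<Rightarrow> real \<Rightarrow> ennreal" where
  "epowr x a = (if x = \<infinity> then \<infinity> else ennreal (enn2real x powr a))"

definition upper_half :: "(real \<times> (real^'n)) set" where
  "upper_half = {z. fst z > 0}"

definition whitney_region :: "real \<Rightarrow> real \<Rightarrow> real \<Rightarrow> real^'n \<Rightarrow> (real \<times> (real^'n)) set" where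
  "whitney_region c0 c1 t x = {(\<tau>, \<xi>). t / c1 < \<tau> \<and> \<tau> < c1 * t \<and> \<xi> \<in> ball x (c0 * t)}"

definition whitney_sq :: "real \<Rightarrow> real \<Rightarrow> (real \<times> (real^'n) \<Rightarrow> complex^'m) \<Rightarrow> real \<times> (real^'n) \<Rightarrow> ennreal" where
  "whitney_sq c0 c1 f z =
     (\<integral>\<^sup>+ w \<in> whitney_region c0 c1 (fst z) (snd z). ennreal ((norm (f w))\<^sup>2) \<partial>lebesgue)
       / emeasure lebesgue (whitney_region c0 c1 (fst z) (snd z))"

definition kappa :: "real \<Rightarrow> (real \<times> (real^'n) \<Rightarrow> complex^'m) \<Rightarrow> real \<times> (real^'n) \<Rightarrow> complex^'m" where
  "kappa a f z = of_real (fst z powr a) *\<^sub>R f z"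

text \<open>The Z-norm with exponent (p,s) and Whitney parameter (c0,c1):
  || W_c (kappa^{-s} f) ||_{L^p(dx dt / t)}.\<close>
definition Z_norm :: "real \<Rightarrow> real \<Rightarrow> real \<Rightarrow> real \<Rightarrow> (real \<times> (real^'n) \<Rightarrow> complex^'m) \<Rightarrow> ennreal" where
  "Z_norm p s c0 c1 f =
     epowr (\<integral>\<^sup>+ z. indicator upper_half z *
               epowr (whitney_sq c0 c1 (kappa (- s) f) z) (p / 2) / ennreal (fst z) \<partial>lebesgue) (1 / p)"

text \<open>Open dyadic cubes in R^n, indexed by (j, m): Q = prod_i (2^j m_i, 2^j (m_i+1)),
  side length l(Q) = 2^j.\<close>
definition dyadic_cube :: "int \<Rightarrow> int^'n \<Rightarrow> (real^'n) set" where
  "dyadic_cube j m = {x. \<forall>i. 2 powr j * of_int (m $ i) < x $ i \<and> x $ i < 2 powr j * (of_int (m $ i) + 1)}"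

definition dyadic_len :: "int \<Rightarrow> real" where
  "dyadic_len j = 2 powr j"

definition whitney_cube :: "int \<Rightarrow> int \<Rightarrow> int^'n \<Rightarrow> (real \<times> (real^'n)) set" where
  "whitney_cube k j m = {(\<tau>, \<xi>). 2 powr k * dyadic_len j < \<tau> \<and> \<tau> < 2 powr (k + 1) * dyadic_len j
                                  \<and> \<xi> \<in> dyadic_cube j m}"

text \<open>[|f|^2]_{Qbar^k} (before taking the square root):
  integral over the Whitney cube of |f|^2 d tau d xi / tau^{1+n}.\<close>
definition cube_sq :: "int \<Rightarrow> int \<Rightarrow> int^'n \<Rightarrow> (real \<times> (real^'n) \<Rightarrow> complex^'m) \<Rightarrow> ennreal" where
  "cube_sq k j m f =
     (\<integral>\<^sup>+ w \<in> whitney_cube k j m.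
         ennreal ((norm (f w))\<^sup>2 / fst w ^ (1 + CARD('n))) \<partial>lebesgue)"

definition dyadic_norm :: "real \<Rightarrow> real \<Rightarrow> int \<Rightarrow> (real \<times> (real^'n) \<Rightarrow> complex^'m) \<Rightarrow> ennreal" where
  "dyadic_norm p s k f =
     epowr (\<integral>\<^sup>+ q. ennreal (dyadic_len (fst q) ^ CARD('n) * dyadic_len (fst q) powr (- s * p))
                    * epowr (cube_sq k (fst q) (snd q) f) (p / 2)
            \<partial>(count_space (UNIV :: (int \<times> (int^'n)) set))) (1 / p)"

end

theory Submission
  imports Defs
begin

text \<open>
  Both sides compare Whitney averages at points (t, x) with the weighted L^2 masses of the
  Whitney cubes (2^k l(Q), 2^(k+1) l(Q)) \<times> Q, on which t and l(Q) are comparable.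

  Upper bound: the Whitney region of (t, x) is covered by the closures of the Whitney cubes
  whose enlargement contains (t, x). Only boundedly many enlargements contain a given point,
  so the p/2-th power of the Whitney average is controlled by a sum of boundedly many cube
  terms; integrating the enlargements against dx dt/t produces the factor l(Q)^n.

  Lower bound: split every Whitney cube into boundedly many pieces of a fixed finer generation.
  Each piece lies inside the Whitney region of every point of a probe set above it, whose
  dx dt/t-measure is comparable to l(Q)^n; probe sets of distinct pieces are disjoint, so
  summing over all pieces costs at most one integral of the Z-density.
\<close>

lemma epowr_mono: "x \<le> y \<Longrightarrow> 0 \<le> a \<Longrightarrow> epowr x a \<le> epowr y a"
proof (cases "y = \<infinity>")
  case False
  assume "x \<le> y" "0 \<le> a"
  with False have "x \<noteq> \<infinity>" using top.extremum_unique by fastforce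
  with False \<open>x \<le> y\<close> \<open>0 \<le> a\<close> show ?thesis
    by (auto simp: epowr_def top.not_eq_extremum intro!: ennreal_leI powr_mono2 enn2real_mono)
qed (simp add: epowr_def)

lemma epowr_ennreal_mult:
  "0 < c \<Longrightarrow> 0 < a \<Longrightarrow> epowr (ennreal c * x) a = ennreal (c powr a) * epowr x a"
  by (cases "x = \<infinity>")
    (auto simp: epowr_def ennreal_mult_top enn2real_mult powr_mult ennreal_mult' ennreal_mult_eq_top_iff)

lemma epowr_le_ennreal_mult:
  assumes "x \<le> ennreal c * y" "0 < c" "0 < a"
  shows "epowr x a \<le> ennreal (c powr a) * epowr y a"
  using epowr_mono[OF assms(1) less_imp_le[OF assms(3)]] epowr_ennreal_mult[OF assms(2,3)] by simp

lemma epowr_le_ennreal_mult_mono: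
  assumes "x \<le> ennreal c * y" "0 < c" "0 < a" "c powr a \<le> C"
  shows "epowr x a \<le> ennreal C * epowr y a"
proof -
  have "epowr x a \<le> ennreal (c powr a) * epowr y a" by (rule epowr_le_ennreal_mult[OF assms(1-3)])
  also have "\<dots> \<le> ennreal C * epowr y a" using assms(4) by (intro mult_right_mono ennreal_leI) simp_all
  finally show ?thesis .
qed

text \<open>The sum is at most N times its largest term.\<close>
lemma epowr_sum_le:
  fixes b :: "'i \<Rightarrow> ennreal"
  assumes "finite S" "card S \<le> N" "0 < q"
  shows "epowr (\<Sum>i\<in>S. b i) q \<le> ennreal (real N powr q) * (\<Sum>i\<in>S. epowr (b i) q)"
proof (cases "S = {} \<or> (\<exists>i\<in>S. b i = \<infinity>)")
  case True
  then show ?thesis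
  proof
    assume "\<exists>i\<in>S. b i = \<infinity>"
    then obtain i where i: "i \<in> S" "b i = \<infinity>" by blast
    with assms have "0 < N" by (metis card_gt_0_iff empty_iff leD not_gr_zero)
    have "epowr (b i) q \<le> (\<Sum>i\<in>S. epowr (b i) q)"
      using i assms(1) by (intro member_le_sum) auto
    with i have "(\<Sum>i\<in>S. epowr (b i) q) = \<infinity>" by (simp add: epowr_def top_unique)
    with \<open>0 < N\<close> show ?thesis by (simp add: ennreal_mult_top)
  qed (simp add: epowr_def)
next
  case False
  define r where "r i = enn2real (b i)" for i
  have b_eq: "b i = ennreal (r i)" if "i \<in> S" for i
    using False that by (simp add: r_def ennreal_enn2real_if)
  have r_nonneg: "0 \<le> r i" for i by (simp add: r_def)
  define M where "M = Max (r ` S)"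
  have "M \<in> r ` S" and le_M: "\<And>i. i \<in> S \<Longrightarrow> r i \<le> M"
    using assms(1) False by (auto simp: M_def)
  then have "0 \<le> M" using r_nonneg by auto
  have "(\<Sum>i\<in>S. r i) \<le> real N * M"
    using sum_mono[of S r "\<lambda>_. M", OF le_M] assms(2) \<open>0 \<le> M\<close>
    by (simp add: mult_right_mono order_trans)
  then have "(\<Sum>i\<in>S. r i) powr q \<le> (real N * M) powr q"
    using assms(3) r_nonneg by (simp add: powr_mono2 sum_nonneg)
  also have "\<dots> = real N powr q * M powr q" using \<open>0 \<le> M\<close> by (simp add: powr_mult)
  also have "M powr q \<le> (\<Sum>i\<in>S. r i powr q)"
    using \<open>M \<in> r ` S\<close> assms(1) by (auto intro!: member_le_sum)
  finally have "(\<Sum>i\<in>S. r i) powr q \<le> real N powr q * (\<Sum>i\<in>S. r i powr q)"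
    by (simp add: mult_left_mono)
  then show ?thesis
    using b_eq r_nonneg
    by (simp add: epowr_def sum_nonneg ennreal_mult'[symmetric] ennreal_leI)
qed

lemma powr_le_max_powr:
  fixes x :: real
  assumes "0 < a" "a \<le> x" "x \<le> b"
  shows "x powr e \<le> max (a powr e) (b powr e)"
  using assms powr_mono2[of e x b] powr_mono2'[of e a x] by (cases "0 \<le> e") auto

lemma finite_card_int_between:
  fixes a b :: real
  shows "finite {m::int. a < m \<and> m < b} \<and> card {m::int. a < m \<and> m < b} \<le> nat \<lceil>b - a\<rceil> + 2"
proof -
  have sub: "{m::int. a < m \<and> m < b} \<subseteq> {\<lfloor>a\<rfloor>..\<lceil>b\<rceil>}"
    by (auto simp: floor_less_iff less_ceiling_iff less_imp_le)
  have "\<lceil>b\<rceil> \<le> \<lceil>b - a\<rceil> + \<lceil>a\<rceil>" using ceiling_add_le[of "b - a" a] by simp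
  moreover have "\<lceil>a\<rceil> \<le> \<lfloor>a\<rfloor> + 1" by linarith
  ultimately have "card {\<lfloor>a\<rfloor>..\<lceil>b\<rceil>} \<le> nat \<lceil>b - a\<rceil> + 2" by (simp add: nat_le_iff) linarith
  then show ?thesis using sub by (meson card_mono finite_atLeastAtMost_int finite_subset le_trans)
qed

lemma finite_card_vec_le:
  fixes A :: "'n::finite \<Rightarrow> 'a set"
  assumes "\<And>i. finite (A i)" "\<And>i. card (A i) \<le> K"
  shows "finite {v :: 'a^'n. \<forall>i. v$i \<in> A i} \<and> card {v :: 'a^'n. \<forall>i. v$i \<in> A i} \<le> K ^ CARD('n)"
proof -
  have eq: "{v :: 'a^'n. \<forall>i. v$i \<in> A i} = vec_lambda ` PiE UNIV A"
  proof (intro set_eqI iffI)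
    fix v :: "'a^'n" assume "v \<in> {v. \<forall>i. v$i \<in> A i}"
    then have "vec_nth v \<in> PiE UNIV A" by auto
    then show "v \<in> vec_lambda ` PiE UNIV A" by (metis image_eqI vec_nth_inverse)
  qed auto
  have fin: "finite (PiE UNIV A)" using assms(1) by (simp add: finite_PiE)
  have "card (vec_lambda ` PiE UNIV A :: ('a^'n) set) \<le> (\<Prod>i\<in>UNIV. card (A i))"
    using card_image_le[OF fin] by (simp add: card_PiE)
  also have "\<dots> \<le> K ^ CARD('n)" using prod_mono[of UNIV "\<lambda>i. card (A i)" "\<lambda>_. K"] assms(2) by simp
  finally show ?thesis using eq fin by simp
qed

lemma finite_card_int_vec_between:
  fixes a :: "'n::finite \<Rightarrow> real"
  shows "finite {m :: int^'n. \<forall>i. a i < m$i \<and> m$i < a i + d}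
    \<and> card {m :: int^'n. \<forall>i. a i < m$i \<and> m$i < a i + d} \<le> (nat \<lceil>d\<rceil> + 2) ^ CARD('n)"
proof -
  have "finite {b::int. a i < b \<and> b < a i + d} \<and> card {b::int. a i < b \<and> b < a i + d} \<le> nat \<lceil>d\<rceil> + 2" for i
    using finite_card_int_between[of "a i" "a i + d"] by simp
  then show ?thesis
    using finite_card_vec_le[of "\<lambda>i. {b::int. a i < b \<and> b < a i + d}" "nat \<lceil>d\<rceil> + 2"] by simp
qed

lemma finite_card_SigmaI_le:
  assumes "finite J \<and> card J \<le> A" "\<And>j. finite (I j) \<and> card (I j) \<le> B"
  shows "finite (Sigma J I) \<and> card (Sigma J I) \<le> A * B"
proof -
  have "card (Sigma J I) \<le> card J * B"
    using assms sum_bounded_above[of J "\<lambda>j. card (I j)" B] by (simp add: card_SigmaI)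
  also have "\<dots> \<le> A * B" using assms(1) by simp
  finally show ?thesis using assms by simp
qed

lemma nn_integral_count_space_inj_le:
  fixes G :: "'b \<Rightarrow> ennreal" and g :: "'a \<Rightarrow> 'b"
  assumes "inj g"
  shows "(\<integral>\<^sup>+ q. G (g q) \<partial>count_space UNIV) \<le> (\<integral>\<^sup>+ q. G q \<partial>count_space UNIV)"
proof -
  have "(\<integral>\<^sup>+ q. G (g q) \<partial>count_space UNIV) = (\<integral>\<^sup>+ y. G y \<partial>count_space (range g))"
    using assms by (intro nn_integral_bij_count_space) (simp add: inj_on_imp_bij_betw)
  also have "\<dots> = (\<integral>\<^sup>+ y. G y * indicator (range g) y \<partial>count_space UNIV)"
    by (rule nn_integral_count_space_indicator) simp
  also have "\<dots> \<le> (\<integral>\<^sup>+ y. G y \<partial>count_space UNIV)"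
    by (intro nn_integral_mono) (simp split: split_indicator)
  finally show ?thesis .
qed

lemma floor_divide_cell:
  fixes l x :: real
  assumes "0 < l"
  shows "l * of_int \<lfloor>x / l\<rfloor> \<le> x \<and> x < l * (of_int \<lfloor>x / l\<rfloor> + 1)"
proof -
  have "of_int \<lfloor>x / l\<rfloor> \<le> x / l" "x / l < of_int \<lfloor>x / l\<rfloor> + 1" by linarith+
  then have "l * of_int \<lfloor>x / l\<rfloor> \<le> l * (x / l)" "l * (x / l) < l * (of_int \<lfloor>x / l\<rfloor> + 1)"
    using assms by (intro mult_left_mono mult_strict_left_mono; simp)+
  with assms show ?thesis by simp
qed

lemma refined_index_bounds:
  fixes h :: real and M :: nat and a a' :: int and x :: real
  assumes "0 < h" "h * 2 ^ M * of_int a < x" "x < h * 2 ^ M * (of_int a + 1)"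
    "h * of_int a' \<le> x" "x < h * (of_int a' + 1)"
  shows "a' - 2 ^ M * a \<in> {0..<2 ^ M}"
proof -
  have "h * (2 ^ M * a) < h * (a' + 1)" "h * a' < h * (2 ^ M * (a + 1))"
    using assms(2-5) by (simp_all add: mult.assoc)
  then have "real_of_int (2 ^ M * a) < real_of_int (a' + 1)" "real_of_int a' < real_of_int (2 ^ M * (a + 1))"
    using assms(1) by (simp_all only: mult_less_cancel_left_pos of_int_mult of_int_add of_int_power)
  then show ?thesis by (simp only: of_int_less_iff) (simp add: algebra_simps)
qed

lemma borel_measurable_fst_lebesgue [measurable]:
  "fst \<in> borel_measurable (lebesgue :: ('a::euclidean_space \<times> 'b::euclidean_space) measure)"
proof -
  have "fst \<in> borel_measurable (lborel :: ('a \<times> 'b) measure)"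
    by (simp add: measurable_lborel1 borel_measurable_continuous_onI continuous_on_fst)
  then show ?thesis by (rule measurable_completion)
qed

lemma Times_in_sets_lebesgue:
  fixes A :: "'a::euclidean_space set" and B :: "'b::euclidean_space set"
  assumes "A \<in> sets borel" "B \<in> sets borel"
  shows "A \<times> B \<in> sets (lebesgue :: ('a \<times> 'b) measure)"
  using assms by (simp flip: lborel_prod add: sets_completionI_sets)

lemma emeasure_lebesgue_Times:
  fixes A :: "'a::euclidean_space set" and B :: "'b::euclidean_space set"
  assumes "A \<in> sets borel" "B \<in> sets borel"
  shows "emeasure lebesgue (A \<times> B) = emeasure lborel A * emeasure lborel B"
proof -
  have "A \<times> B \<in> sets (lborel :: ('a \<times> 'b) measure)"
    using assms by (simp flip: lborel_prod)
  then have "emeasure lebesgue (A \<times> B) = emeasure (lborel \<Otimes>\<^sub>M lborel) (A \<times> B)"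
    by (simp add: lborel_prod)
  also have "\<dots> = emeasure lborel A * emeasure lborel B"
    using assms by (intro lborel.emeasure_pair_measure_Times) auto
  finally show ?thesis .
qed

lemma Times_in_null_sets_lebesgue:
  fixes A :: "'a::euclidean_space set" and B :: "'b::euclidean_space set"
  assumes "A \<in> sets borel" "B \<in> sets borel" "emeasure lborel A = 0 \<or> emeasure lborel B = 0"
  shows "A \<times> B \<in> null_sets (lebesgue :: ('a \<times> 'b) measure)"
  using assms by (auto intro!: null_setsI Times_in_sets_lebesgue simp: emeasure_lebesgue_Times)

lemma emeasure_lborel_cbox_Diff_box:
  fixes a b :: "'a::euclidean_space"
  shows "emeasure lborel (cbox a b - box a b) = 0"
proof -
  have "emeasure lborel (cbox a b - box a b) = emeasure lborel (cbox a b) - emeasure lborel (box a b)"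
    using emeasure_lborel_box_finite[of a b] by (intro emeasure_Diff) (auto simp: box_subset_cbox)
  moreover have "emeasure lborel (cbox a b) = emeasure lborel (box a b)"
    by (simp only: emeasure_lborel_cbox_eq emeasure_lborel_box_eq)
  ultimately show ?thesis using emeasure_lborel_box_finite[of a b] by simp
qed

lemma emeasure_lborel_box_cart:
  fixes a b :: "real^'n"
  assumes "\<And>i. a$i \<le> b$i"
  shows "emeasure lborel (box a b) = ennreal (\<Prod>i\<in>UNIV. b$i - a$i)"
proof -
  have "emeasure lborel (box a b) = emeasure lborel (cbox a b)"
    by (simp only: emeasure_lborel_box_eq emeasure_lborel_cbox_eq)
  also have "\<dots> = ennreal (measure lborel (cbox a b))"
    using emeasure_lborel_cbox_finite[of a b] by (simp add: emeasure_eq_ennreal_measure)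
  also have "measure lborel (cbox a b) = (\<Prod>i\<in>UNIV. b$i - a$i)"
    using assms by (intro content_cbox_cart) (auto simp: interval_eq_empty_cart not_less)
  finally show ?thesis .
qed

lemma AE_Icc_cbox_iff_Ioo_box:
  fixes a b :: real and lo hi :: "'a::euclidean_space"
  shows "AE w in lebesgue. w \<in> {a..b} \<times> cbox lo hi \<longleftrightarrow> w \<in> {a<..<b} \<times> box lo hi"
proof -
  define N :: "(real \<times> 'a) set" where "N = {a, b} \<times> UNIV \<union> UNIV \<times> (cbox lo hi - box lo hi)"
  have "N \<in> null_sets lebesgue"
    unfolding N_def
    by (intro null_sets.Un Times_in_null_sets_lebesgue)
      (auto simp: emeasure_lborel_cbox_Diff_box emeasure_lborel_countable)
  then show ?thesis
    by (rule AE_I') (auto simp: N_def dest: subsetD[OF box_subset_cbox])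
qed

section \<open>Dyadic cubes and Whitney regions\<close>

lemma dyadic_len_pos [simp]: "0 < dyadic_len j"
  by (simp add: dyadic_len_def)

lemma dyadic_len_nonneg [simp]: "0 \<le> dyadic_len j"
  by (simp add: dyadic_len_def)

lemma dyadic_len_neq_zero [simp]: "dyadic_len j \<noteq> 0"
  by (simp add: dyadic_len_def)

lemma dyadic_len_diff: "dyadic_len (j - int M) = dyadic_len j / 2 ^ M"
  by (simp add: dyadic_len_def powr_diff powr_realpow)

lemma exists_dyadic_scale:
  fixes k :: int
  assumes "0 < \<tau>"
  shows "\<exists>j. 2 powr k * dyadic_len j \<le> \<tau> \<and> \<tau> < 2 powr (k + 1) * dyadic_len j"
proof -
  define L where "L = \<lfloor>log 2 \<tau>\<rfloor>"
  have "2 powr L \<le> 2 powr (log 2 \<tau>)" "2 powr (log 2 \<tau>) < 2 powr (L + 1)"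
    unfolding L_def by (intro powr_mono powr_less_mono; linarith)+
  moreover have "2 powr k * dyadic_len (L - k) = 2 powr L"
    "2 powr (k + 1) * dyadic_len (L - k) = 2 powr (L + 1)"
    by (simp_all add: dyadic_len_def ac_simps flip: powr_add)
  ultimately show ?thesis using assms by (intro exI[of _ "L - k"]) simp
qed

lemma dyadic_cube_unique:
  assumes "x \<in> dyadic_cube j m" "x \<in> dyadic_cube j m'"
  shows "m = m'"
proof -
  have "2 powr j * of_int (m$i) < x$i" "x$i < 2 powr j * (of_int (m$i) + 1)"
    "2 powr j * of_int (m'$i) < x$i" "x$i < 2 powr j * (of_int (m'$i) + 1)" for i
    using assms by (simp_all add: dyadic_cube_def)
  then have "2 powr j * of_int (m$i) < 2 powr j * (of_int (m'$i) + 1)"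
    "2 powr j * of_int (m'$i) < 2 powr j * (of_int (m$i) + 1)" for i
    by (meson less_trans)+
  then have "real_of_int (m$i) < real_of_int (m'$i + 1)" "real_of_int (m'$i) < real_of_int (m$i + 1)" for i
    by (simp_all only: mult_less_cancel_left_pos powr_gt_zero of_int_add of_int_1)
  then have lt: "m$i < m'$i + 1" "m'$i < m$i + 1" for i
    by (simp_all only: of_int_less_iff)
  have "m$i = m'$i" for i using lt[of i] by linarith
  then show ?thesis by (simp add: vec_eq_iff)
qed

lemma dyadic_cube_eq_box:
  "dyadic_cube j m = box (\<chi> i. dyadic_len j * of_int (m$i)) (\<chi> i. dyadic_len j * (of_int (m$i) + 1))"
  by (auto simp: dyadic_cube_def dyadic_len_def mem_box_cart)

lemma dyadic_cube_in_sets_borel: "dyadic_cube j m \<in> sets borel"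
  unfolding dyadic_cube_eq_box by simp

lemma emeasure_dyadic_cube: "emeasure lborel (dyadic_cube j (m :: int^'n)) = ennreal (dyadic_len j ^ CARD('n))"
  unfolding dyadic_cube_eq_box by (subst emeasure_lborel_box_cart) (simp_all add: algebra_simps)

lemma whitney_cube_eq:
  "whitney_cube k j m = {2 powr k * dyadic_len j <..< 2 powr (k + 1) * dyadic_len j} \<times>
     box (\<chi> i. dyadic_len j * of_int (m$i)) (\<chi> i. dyadic_len j * (of_int (m$i) + 1))"
  by (auto simp: whitney_cube_def dyadic_cube_eq_box)

lemma whitney_region_eq: "whitney_region c0 c1 t x = {t/c1<..<c1*t} \<times> ball x (c0*t)"
  by (auto simp: whitney_region_def)

lemma whitney_region_in_sets: "whitney_region c0 c1 t x \<in> sets lebesgue"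
  unfolding whitney_region_eq by (intro Times_in_sets_lebesgue) auto

definition whitney_vol :: "real \<Rightarrow> real \<Rightarrow> nat \<Rightarrow> real" where
  "whitney_vol c0 c1 n = (c1 - 1/c1) * unit_ball_vol n * c0 ^ n"

lemma whitney_vol_pos: "0 < c0 \<Longrightarrow> 1 < c1 \<Longrightarrow> 0 < whitney_vol c0 c1 n"
  by (simp add: whitney_vol_def field_simps less_1_mult)

lemma emeasure_whitney_region:
  fixes x :: "real^'n"
  assumes "0 < t" "0 < c0" "1 < c1"
  shows "emeasure lebesgue (whitney_region c0 c1 t x) = ennreal (whitney_vol c0 c1 CARD('n) * t ^ (CARD('n) + 1))"
proof -
  have "t / c1 \<le> t" "t \<le> c1 * t" using assms by (simp_all add: divide_le_eq)
  then have "t / c1 \<le> c1 * t" by linarith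
  then have "emeasure lebesgue (whitney_region c0 c1 t x) = ennreal ((c1 * t - t / c1) * (unit_ball_vol CARD('n) * (c0 * t) ^ CARD('n)))"
    unfolding whitney_region_eq using assms
    by (subst emeasure_lebesgue_Times) (auto simp: emeasure_ball ennreal_mult')
  then show ?thesis by (simp add: whitney_vol_def algebra_simps power_mult_distrib)
qed

lemma whitney_sq_eq:
  fixes f :: "real \<times> (real^'n) \<Rightarrow> complex^'m"
  assumes "0 < t" "0 < c0" "1 < c1"
  shows "whitney_sq c0 c1 f (t, x) = (\<integral>\<^sup>+ w. ennreal ((norm (f w))\<^sup>2) * indicator (whitney_region c0 c1 t x) w \<partial>lebesgue)
            / ennreal (whitney_vol c0 c1 CARD('n) * t ^ (CARD('n) + 1))"
  unfolding whitney_sq_def by (simp add: emeasure_whitney_region[OF assms])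

lemma norm_kappa_sq:
  "0 < fst w \<Longrightarrow> (norm (kappa a f w))\<^sup>2 = fst w powr (2 * a) * (norm (f w))\<^sup>2"
  by (simp add: kappa_def power_mult_distrib power2_eq_square flip: powr_add)

lemma borel_measurable_kappa_sq:
  fixes f :: "real \<times> (real^'n) \<Rightarrow> complex^'m"
  assumes "f \<in> borel_measurable lebesgue"
  shows "(\<lambda>w. ennreal ((norm (kappa a f w))\<^sup>2)) \<in> borel_measurable lebesgue"
  unfolding kappa_def using assms by measurable

definition cube_density :: "(real \<times> (real^'n) \<Rightarrow> complex^'m) \<Rightarrow> real \<times> (real^'n) \<Rightarrow> ennreal" where
  "cube_density f w = ennreal ((norm (f w))\<^sup>2 / fst w ^ (1 + CARD('n)))"

lemma cube_sq_eq: "cube_sq k j m f = (\<integral>\<^sup>+ w. cube_density f w * indicator (whitney_cube k j m) w \<partial>lebesgue)"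
  by (simp add: cube_sq_def cube_density_def)

lemma borel_measurable_cube_density:
  fixes f :: "real \<times> (real^'n) \<Rightarrow> complex^'m"
  assumes "f \<in> borel_measurable lebesgue"
  shows "cube_density f \<in> borel_measurable lebesgue"
  unfolding cube_density_def using assms by measurable

definition Z_density :: "real \<Rightarrow> real \<Rightarrow> real \<Rightarrow> real \<Rightarrow> (real \<times> (real^'n) \<Rightarrow> complex^'m) \<Rightarrow> real \<times> (real^'n) \<Rightarrow> ennreal" where
  "Z_density p s c0 c1 f z = indicator upper_half z * epowr (whitney_sq c0 c1 (kappa (- s) f) z) (p / 2) / ennreal (fst z)"

definition cube_term :: "real \<Rightarrow> real \<Rightarrow> int \<Rightarrow> (real \<times> (real^'n) \<Rightarrow> complex^'m) \<Rightarrow> int \<times> (int^'n) \<Rightarrow> ennreal" where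
  "cube_term p s k f q = ennreal (dyadic_len (fst q) powr (- s * p)) * epowr (cube_sq k (fst q) (snd q) f) (p / 2)"

lemma Z_norm_eq: "Z_norm p s c0 c1 f = epowr (\<integral>\<^sup>+ z. Z_density p s c0 c1 f z \<partial>lebesgue) (1 / p)"
  by (simp add: Z_norm_def Z_density_def)

lemma dyadic_norm_eq:
  fixes f :: "real \<times> (real^'n) \<Rightarrow> complex^'m"
  shows "dyadic_norm p s k f = epowr (\<integral>\<^sup>+ q. ennreal (dyadic_len (fst q) ^ CARD('n)) * cube_term p s k f q \<partial>count_space UNIV) (1 / p)"
  unfolding dyadic_norm_def cube_term_def
  by (intro arg_cong2[where f = epowr] nn_integral_cong refl) (simp add: ennreal_mult mult.assoc)

locale whitney_dyadic =
  fixes p s c0 c1 :: real and k :: int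
  assumes p_pos: "0 < p" and c0_pos: "0 < c0" and c1_gt: "3 / 2 < c1"
begin

lemma c1_gt_1: "1 < c1"
  using c1_gt by simp

lemma c1_pos: "0 < c1"
  using c1_gt by simp

definition band_max :: "real \<Rightarrow> real" where
  "band_max e = max ((2 powr k) powr e) ((2 powr (k + 1)) powr e)"

lemma band_max_pos: "0 < band_max e"
  by (simp add: band_max_def less_max_iff_disj)

lemma powr_le_band_max:
  assumes "0 < l" "2 powr k * l \<le> \<tau>" "\<tau> \<le> 2 powr (k + 1) * l"
  shows "\<tau> powr e \<le> band_max e * l powr e"
proof -
  have "(\<tau> / l) powr e \<le> band_max e"
    unfolding band_max_def using assms by (intro powr_le_max_powr) (auto simp: field_simps)
  then show ?thesis
    using assms by (simp add: powr_divide divide_le_eq)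
qed

section \<open>The Z-norm is bounded by the dyadic sum\<close>

definition enlarge_radius :: real where
  "enlarge_radius = c0 * c1 * 2 powr (k + 1)"

lemma enlarge_radius_pos: "0 < enlarge_radius"
  using c0_pos c1_pos by (simp add: enlarge_radius_def)

text \<open>Every point whose Whitney region meets the closed Whitney cube of (j, m) lies in
  the enlarged cube of (j, m).\<close>
definition enlarged_cube :: "int \<Rightarrow> int^'n \<Rightarrow> (real \<times> (real^'n)) set" where
  "enlarged_cube j m = {2 powr k * dyadic_len j / c1 <..< c1 * (2 powr (k + 1) * dyadic_len j)} \<times>
     box (\<chi> i. dyadic_len j * (of_int (m$i) - enlarge_radius)) (\<chi> i. dyadic_len j * (of_int (m$i) + 1 + enlarge_radius))"

definition closed_whitney_cube :: "int \<Rightarrow> int^'n \<Rightarrow> (real \<times> (real^'n)) set" where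
  "closed_whitney_cube j m = {2 powr k * dyadic_len j .. 2 powr (k + 1) * dyadic_len j} \<times>
     cbox (\<chi> i. dyadic_len j * of_int (m$i)) (\<chi> i. dyadic_len j * (of_int (m$i) + 1))"

lemma enlarged_cube_in_sets: "enlarged_cube j m \<in> sets lebesgue"
  unfolding enlarged_cube_def by (intro Times_in_sets_lebesgue) auto

lemma closed_whitney_cube_in_sets: "closed_whitney_cube j m \<in> sets lebesgue"
  unfolding closed_whitney_cube_def by (intro Times_in_sets_lebesgue) auto

lemma whitney_region_covered:
  fixes x \<xi> :: "real^'n"
  assumes "0 < t" and w: "(\<tau>, \<xi>) \<in> whitney_region c0 c1 t x"
  obtains j m where "(\<tau>, \<xi>) \<in> closed_whitney_cube j m" "(t, x) \<in> enlarged_cube j m"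
proof -
  from w have \<tau>: "t / c1 < \<tau>" "\<tau> < c1 * t" and "dist x \<xi> < c0 * t"
    by (auto simp: whitney_region_def)
  have "t < c1 * \<tau>" using \<tau>(1) c1_pos by (simp add: divide_less_eq mult.commute)
  have "0 < \<tau>" using \<tau>(1) divide_pos_pos[OF assms(1) c1_pos] by linarith
  then obtain j where j: "2 powr k * dyadic_len j \<le> \<tau>" "\<tau> < 2 powr (k + 1) * dyadic_len j"
    using exists_dyadic_scale by blast
  define l where "l = dyadic_len j"
  define m :: "int^'n" where "m = (\<chi> i. \<lfloor>\<xi>$i / l\<rfloor>)"
  have m: "l * of_int (m$i) \<le> \<xi>$i" "\<xi>$i < l * (of_int (m$i) + 1)" for i
    using floor_divide_cell[of l "\<xi>$i"] by (simp_all add: m_def l_def)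
  have "c0 * t < c0 * (c1 * \<tau>)" using \<open>t < c1 * \<tau>\<close> c0_pos by simp
  also have "\<dots> < l * enlarge_radius"
    using j c0_pos c1_pos by (simp add: enlarge_radius_def l_def mult_ac)
  finally have close: "\<bar>x$i - \<xi>$i\<bar> < l * enlarge_radius" for i
    using component_le_norm_cart[of "x - \<xi>" i] \<open>dist x \<xi> < c0 * t\<close> by (simp add: dist_norm)
  have "l * (of_int (m$i) - enlarge_radius) < x$i \<and> x$i < l * (of_int (m$i) + 1 + enlarge_radius)" for i
  proof -
    have "l * (of_int (m$i) - enlarge_radius) = l * of_int (m$i) - l * enlarge_radius"
      "l * (of_int (m$i) + 1 + enlarge_radius) = l * (of_int (m$i) + 1) + l * enlarge_radius"
      by (simp_all add: algebra_simps)
    moreover have "x$i - \<xi>$i < l * enlarge_radius" "\<xi>$i - x$i < l * enlarge_radius"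
      using close[of i] by (simp_all add: abs_less_iff)
    ultimately show ?thesis using m[of i] by (intro conjI) linarith+
  qed
  moreover have "2 powr k * l / c1 < t"
    using j \<tau> c1_pos by (simp add: l_def divide_less_eq mult.commute)
  moreover have "t < c1 * (2 powr (k + 1) * l)"
    using \<open>t < c1 * \<tau>\<close> mult_strict_left_mono[OF j(2) c1_pos] by (simp add: l_def)
  ultimately have "(t, x) \<in> enlarged_cube j m"
    by (simp add: enlarged_cube_def mem_box_cart l_def)
  moreover have "(\<tau>, \<xi>) \<in> closed_whitney_cube j m"
    using j m by (auto simp: closed_whitney_cube_def mem_box_cart l_def less_imp_le)
  ultimately show ?thesis using that by blast
qed

lemma enlarged_cube_scale_bounds:
  assumes "(t, x) \<in> enlarged_cube j m"
  shows "t / (c1 * 2 powr (k + 1)) < dyadic_len j" "dyadic_len j < c1 * t / 2 powr k"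
  using assms c1_pos by (auto simp: enlarged_cube_def field_simps)

lemma enlarged_cube_index_bounds:
  assumes "(t, x) \<in> enlarged_cube j m"
  shows "x$i / dyadic_len j - 1 - enlarge_radius < of_int (m$i)"
    "of_int (m$i) < x$i / dyadic_len j + enlarge_radius"
proof -
  have "dyadic_len j * (of_int (m$i) - enlarge_radius) < x$i"
    "x$i < dyadic_len j * (of_int (m$i) + 1 + enlarge_radius)"
    using assms by (auto simp: enlarged_cube_def mem_box_cart)
  then have "of_int (m$i) - enlarge_radius < x$i / dyadic_len j"
    "x$i / dyadic_len j < of_int (m$i) + 1 + enlarge_radius"
    by (simp_all add: less_divide_eq divide_less_eq mult.commute)
  then show "x$i / dyadic_len j - 1 - enlarge_radius < of_int (m$i)"
    "of_int (m$i) < x$i / dyadic_len j + enlarge_radius" by linarith+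
qed

definition cubes_at :: "real \<times> (real^'n) \<Rightarrow> (int \<times> (int^'n)) set" where
  "cubes_at z = {q. z \<in> enlarged_cube (fst q) (snd q)}"

definition overlap_bound :: "nat \<Rightarrow> nat" where
  "overlap_bound n = (nat \<lceil>log 2 (2 * c1\<^sup>2)\<rceil> + 2) * (nat \<lceil>2 * enlarge_radius + 1\<rceil> + 2) ^ n"

lemma finite_card_cubes_at:
  fixes x :: "real^'n"
  assumes "0 < t"
  shows "finite (cubes_at (t, x)) \<and> card (cubes_at (t, x)) \<le> overlap_bound CARD('n)"
proof -
  define lo hi where "lo = t / (c1 * 2 powr (k + 1))" and "hi = c1 * t / 2 powr k"
  define J where "J = {j::int. log 2 lo < j \<and> j < log 2 hi}"
  define a where "a j i = x$i / dyadic_len j - 1 - enlarge_radius" for j i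
  define I where "I j = {m :: int^'n. \<forall>i. a j i < m$i \<and> m$i < a j i + (2 * enlarge_radius + 1)}" for j
  have "0 < lo" "0 < hi" using assms c1_pos by (simp_all add: lo_def hi_def)
  have "cubes_at (t, x) \<subseteq> Sigma J I"
  proof
    fix q :: "int \<times> (int^'n)"
    assume "q \<in> cubes_at (t, x)"
    then obtain j m where q: "q = (j, m)" and mem: "(t, x) \<in> enlarged_cube j m"
      by (cases q) (simp add: cubes_at_def)
    note bounds = enlarged_cube_scale_bounds[OF mem] enlarged_cube_index_bounds[OF mem]
    have "log 2 lo < log 2 (dyadic_len j)" "log 2 (dyadic_len j) < log 2 hi"
      using bounds \<open>0 < lo\<close> by (simp_all add: lo_def hi_def)
    then show "q \<in> Sigma J I"
      using bounds by (simp add: q J_def I_def a_def dyadic_len_def algebra_simps)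
  qed
  moreover have "finite (Sigma J I) \<and> card (Sigma J I) \<le> overlap_bound CARD('n)"
    unfolding overlap_bound_def
  proof (rule finite_card_SigmaI_le)
    have "log 2 hi - log 2 lo = log 2 (hi / lo)"
      using \<open>0 < lo\<close> \<open>0 < hi\<close> by (simp add: log_divide)
    also have "hi / lo = 2 * c1\<^sup>2"
      using assms c1_pos by (simp add: lo_def hi_def powr_add field_simps power2_eq_square)
    finally show "finite J \<and> card J \<le> nat \<lceil>log 2 (2 * c1\<^sup>2)\<rceil> + 2"
      using finite_card_int_between[of "log 2 lo" "log 2 hi"] by (simp add: J_def)
  qed (unfold I_def, rule finite_card_int_vec_between)
  ultimately show ?thesis by (meson card_mono finite_subset le_trans)
qed

lemma nn_integral_closed_whitney_cube:
  fixes f :: "real \<times> (real^'n) \<Rightarrow> complex^'m"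
  shows "(\<integral>\<^sup>+ w. cube_density f w * indicator (closed_whitney_cube j m) w \<partial>lebesgue) = cube_sq k j m f"
  unfolding cube_sq_eq closed_whitney_cube_def whitney_cube_eq
  by (intro nn_integral_cong_AE) (auto intro: AE_mp[OF AE_Icc_cbox_iff_Ioo_box] split: split_indicator)

lemma kappa_sq_le_cube_density:
  fixes f :: "real \<times> (real^'n) \<Rightarrow> complex^'m"
  assumes w: "w \<in> closed_whitney_cube j m" and "fst w < c1 * t"
  shows "(norm (kappa (- s) f w))\<^sup>2
    \<le> band_max (- 2 * s) * c1 ^ (CARD('n) + 1) * dyadic_len j powr (- 2 * s) * t ^ (CARD('n) + 1)
        * ((norm (f w))\<^sup>2 / fst w ^ (1 + CARD('n)))"
proof -
  define n where "n = CARD('n)"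
  from w have band: "2 powr k * dyadic_len j \<le> fst w" "fst w \<le> 2 powr (k + 1) * dyadic_len j"
    by (auto simp: closed_whitney_cube_def)
  moreover have "0 < 2 powr k * dyadic_len j" by simp
  ultimately have "0 < fst w" by linarith
  have "fst w ^ (n + 1) \<le> (c1 * t) ^ (n + 1)"
    using \<open>0 < fst w\<close> assms(2) by (intro power_mono) auto
  then have "fst w powr (- 2 * s) * fst w ^ (n + 1)
      \<le> (band_max (- 2 * s) * dyadic_len j powr (- 2 * s)) * (c1 * t) ^ (n + 1)"
    using powr_le_band_max[OF dyadic_len_pos band] \<open>0 < fst w\<close> band_max_pos[of "- 2 * s"]
    by (intro mult_mono) auto
  then have "fst w powr (- 2 * s) * fst w ^ (n + 1) * ((norm (f w))\<^sup>2 / fst w ^ (n + 1))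
      \<le> band_max (- 2 * s) * dyadic_len j powr (- 2 * s) * (c1 * t) ^ (n + 1) * ((norm (f w))\<^sup>2 / fst w ^ (n + 1))"
    by (rule mult_right_mono) (use \<open>0 < fst w\<close> in simp)
  then show ?thesis
    using \<open>0 < fst w\<close> norm_kappa_sq[OF \<open>0 < fst w\<close>, of "- s" f]
    by (simp add: n_def power_mult_distrib mult_ac)
qed

lemma kappa_sq_le_sum_closed_cubes:
  fixes f :: "real \<times> (real^'n) \<Rightarrow> complex^'m"
  assumes "0 < t"
  shows "ennreal ((norm (kappa (- s) f w))\<^sup>2) * indicator (whitney_region c0 c1 t x) w
    \<le> (\<Sum>q\<in>cubes_at (t, x). ennreal (band_max (- 2 * s) * c1 ^ (CARD('n) + 1) * dyadic_len (fst q) powr (- 2 * s)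
          * t ^ (CARD('n) + 1)) * (cube_density f w * indicator (closed_whitney_cube (fst q) (snd q)) w))"
proof (cases "w \<in> whitney_region c0 c1 t x")
  case True
  then obtain j m where cube: "w \<in> closed_whitney_cube j m" and "(t, x) \<in> enlarged_cube j m"
    using whitney_region_covered[OF assms] by (metis prod.collapse)
  then have "(j, m) \<in> cubes_at (t, x)" by (simp add: cubes_at_def)
  have "fst w < c1 * t" using True by (auto simp: whitney_region_def)
  define g where "g q = ennreal (band_max (- 2 * s) * c1 ^ (CARD('n) + 1) * dyadic_len (fst q) powr (- 2 * s)
          * t ^ (CARD('n) + 1)) * (cube_density f w * indicator (closed_whitney_cube (fst q) (snd q)) w)"
    for q :: "int \<times> (int^'n)"
  have "0 \<le> band_max (- 2 * s) * c1 ^ (CARD('n) + 1) * dyadic_len j powr (- 2 * s) * t ^ (CARD('n) + 1)"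
    using band_max_pos[of "- 2 * s"] c1_pos assms by simp
  then have "ennreal ((norm (kappa (- s) f w))\<^sup>2) * indicator (whitney_region c0 c1 t x) w \<le> g (j, m)"
    using True cube kappa_sq_le_cube_density[OF cube \<open>fst w < c1 * t\<close>, of f]
    unfolding g_def cube_density_def by (simp add: ennreal_mult'[symmetric] ennreal_leI del: ennreal_mult')
  also have "\<dots> \<le> sum g (cubes_at (t, x))"
    using \<open>(j, m) \<in> cubes_at (t, x)\<close> finite_card_cubes_at[OF assms, of x] by (intro member_le_sum) auto
  finally show ?thesis by (simp add: g_def)
qed simp

definition upper_weight :: "nat \<Rightarrow> real" where
  "upper_weight n = band_max (- 2 * s) * c1 ^ (n + 1) / whitney_vol c0 c1 n"

lemma upper_weight_pos: "0 < upper_weight n"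
  using band_max_pos c1_pos whitney_vol_pos[OF c0_pos c1_gt_1]
  by (simp add: upper_weight_def)

lemma whitney_sq_le_sum_cubes:
  fixes f :: "real \<times> (real^'n) \<Rightarrow> complex^'m"
  assumes f: "f \<in> borel_measurable lebesgue" and "0 < t"
  shows "whitney_sq c0 c1 (kappa (- s) f) (t, x)
    \<le> (\<Sum>q\<in>cubes_at (t, x). ennreal (upper_weight CARD('n) * dyadic_len (fst q) powr (- 2 * s))
                                * cube_sq k (fst q) (snd q) f)"
proof -
  define V where "V = whitney_vol c0 c1 CARD('n) * t ^ (CARD('n) + 1)"
  define a where "a q = band_max (- 2 * s) * c1 ^ (CARD('n) + 1) * dyadic_len (fst q) powr (- 2 * s)
                        * t ^ (CARD('n) + 1)" for q :: "int \<times> (int^'n)"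
  have "0 < V" using whitney_vol_pos[OF c0_pos c1_gt_1] assms by (simp add: V_def)
  have a: "0 \<le> a q" for q using band_max_pos[of "- 2 * s"] c1_pos assms by (simp add: a_def)
  have "(\<integral>\<^sup>+ w. ennreal ((norm (kappa (- s) f w))\<^sup>2) * indicator (whitney_region c0 c1 t x) w \<partial>lebesgue)
      \<le> (\<integral>\<^sup>+ w. (\<Sum>q\<in>cubes_at (t, x). ennreal (a q) * (cube_density f w
             * indicator (closed_whitney_cube (fst q) (snd q)) w)) \<partial>lebesgue)"
    unfolding a_def by (intro nn_integral_mono kappa_sq_le_sum_closed_cubes assms)
  also have "\<dots> = (\<Sum>q\<in>cubes_at (t, x). ennreal (a q) * cube_sq k (fst q) (snd q) f)"
  proof -
    have "(\<lambda>w. cube_density f w * indicator (closed_whitney_cube j m) w) \<in> borel_measurable lebesgue" for j m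
      by (intro borel_measurable_times_ennreal borel_measurable_cube_density[OF f]
          borel_measurable_indicator closed_whitney_cube_in_sets)
    then show ?thesis
      by (simp add: nn_integral_sum nn_integral_cmult nn_integral_closed_whitney_cube)
  qed
  finally have "whitney_sq c0 c1 (kappa (- s) f) (t, x)
      \<le> (\<Sum>q\<in>cubes_at (t, x). ennreal (a q) * cube_sq k (fst q) (snd q) f) / ennreal V"
    unfolding whitney_sq_eq[OF assms(2) c0_pos c1_gt_1] V_def by (rule divide_right_mono_ennreal)
  also have "\<dots> = (\<Sum>q\<in>cubes_at (t, x). ennreal (a q / V) * cube_sq k (fst q) (snd q) f)"
    using a \<open>0 < V\<close>
    by (simp add: divide_ennreal_def sum_distrib_left divide_ennreal[symmetric] ennreal_times_divide mult_ac)
  also have "(\<lambda>q. a q / V) = (\<lambda>q. upper_weight CARD('n) * dyadic_len (fst q) powr (- 2 * s))"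
    using assms by (auto simp: a_def V_def upper_weight_def)
  finally show ?thesis .
qed

definition upper_const :: "nat \<Rightarrow> real" where
  "upper_const n = (real (overlap_bound n) * upper_weight n) powr (p / 2)"

lemma upper_const_pos: "0 < upper_const n"
proof -
  have "0 < overlap_bound n" by (simp add: overlap_bound_def)
  then show ?thesis
    using upper_weight_pos[of n] by (simp add: upper_const_def)
qed

lemma epowr_whitney_sq_le_sum_cube_terms:
  fixes f :: "real \<times> (real^'n) \<Rightarrow> complex^'m"
  assumes f: "f \<in> borel_measurable lebesgue" and "0 < t"
  shows "epowr (whitney_sq c0 c1 (kappa (- s) f) (t, x)) (p / 2)
    \<le> ennreal (upper_const CARD('n)) * (\<Sum>q\<in>cubes_at (t, x). cube_term p s k f q)"
proof -
  define N where "N = overlap_bound CARD('n)"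
  have "0 < p / 2" using p_pos by simp
  have "epowr (whitney_sq c0 c1 (kappa (- s) f) (t, x)) (p / 2)
      \<le> epowr (\<Sum>q\<in>cubes_at (t, x). ennreal (upper_weight CARD('n) * dyadic_len (fst q) powr (- 2 * s))
                                   * cube_sq k (fst q) (snd q) f) (p / 2)"
    using \<open>0 < p / 2\<close> by (intro epowr_mono whitney_sq_le_sum_cubes assms) simp
  also have "\<dots> \<le> ennreal (real N powr (p / 2)) * (\<Sum>q\<in>cubes_at (t, x).
        epowr (ennreal (upper_weight CARD('n) * dyadic_len (fst q) powr (- 2 * s)) * cube_sq k (fst q) (snd q) f) (p / 2))"
    using finite_card_cubes_at[OF assms(2), of x] \<open>0 < p / 2\<close> by (intro epowr_sum_le) (simp_all add: N_def)
  also have "\<dots> = ennreal (real N powr (p / 2)) * (\<Sum>q\<in>cubes_at (t, x).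
        ennreal (upper_weight CARD('n) powr (p / 2)) * cube_term p s k f q)"
  proof (intro arg_cong2[where f = "(*)"] sum.cong refl)
    fix q :: "int \<times> (int^'n)"
    have "(upper_weight CARD('n) * dyadic_len (fst q) powr (- 2 * s)) powr (p / 2)
        = upper_weight CARD('n) powr (p / 2) * dyadic_len (fst q) powr (- s * p)"
      using upper_weight_pos by (simp add: powr_mult powr_powr)
    moreover have "0 < upper_weight CARD('n) * dyadic_len (fst q) powr (- 2 * s)"
      by (simp add: upper_weight_pos)
    ultimately show "epowr (ennreal (upper_weight CARD('n) * dyadic_len (fst q) powr (- 2 * s))
          * cube_sq k (fst q) (snd q) f) (p / 2)
        = ennreal (upper_weight CARD('n) powr (p / 2)) * cube_term p s k f q"
      using \<open>0 < p / 2\<close> upper_weight_pos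
      by (simp add: epowr_ennreal_mult cube_term_def ennreal_mult mult.assoc)
  qed
  also have "\<dots> = ennreal (upper_const CARD('n)) * (\<Sum>q\<in>cubes_at (t, x). cube_term p s k f q)"
    using upper_weight_pos
    by (simp add: upper_const_def N_def powr_mult sum_distrib_left sum_distrib_right ennreal_mult' mult_ac)
  finally show ?thesis .
qed

lemma Z_density_le:
  fixes f :: "real \<times> (real^'n) \<Rightarrow> complex^'m" and z :: "real \<times> (real^'n)"
  assumes f: "f \<in> borel_measurable lebesgue"
  shows "Z_density p s c0 c1 f z \<le> ennreal (upper_const CARD('n))
    * (\<integral>\<^sup>+ q. cube_term p s k f q * (indicator (enlarged_cube (fst q) (snd q)) z / ennreal (fst z)) \<partial>count_space UNIV)"
proof (cases "0 < fst z")
  case True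
  obtain t x where z: "z = (t, x)" by (cases z)
  with True have "0 < t" by simp
  have "(\<integral>\<^sup>+ q. cube_term p s k f q * (indicator (enlarged_cube (fst q) (snd q)) z / ennreal (fst z)) \<partial>count_space UNIV)
      = (\<Sum>q\<in>cubes_at z. cube_term p s k f q / ennreal (fst z))"
    using finite_card_cubes_at[OF \<open>0 < t\<close>, of x] unfolding z
    by (subst nn_integral_count_space')
      (auto simp: cubes_at_def ennreal_times_divide split: split_indicator intro!: sum.cong)
  also have "\<dots> = (\<Sum>q\<in>cubes_at z. cube_term p s k f q) / ennreal (fst z)"
    by (simp add: divide_ennreal_def sum_distrib_right)
  finally show ?thesis
    using True epowr_whitney_sq_le_sum_cube_terms[OF f \<open>0 < t\<close>, of x]
    by (simp add: Z_density_def upper_half_def z divide_right_mono_ennreal ennreal_times_divide)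
qed (simp add: Z_density_def upper_half_def)

lemma emeasure_enlarged_cube:
  fixes j :: int and m :: "int^'n"
  shows "emeasure lebesgue (enlarged_cube j m :: (real \<times> (real^'n)) set)
    = ennreal ((2 * c1\<^sup>2 - 1) * (2 powr k * dyadic_len j / c1) * (dyadic_len j * (1 + 2 * enlarge_radius)) ^ CARD('n))"
proof -
  define a where "a = 2 powr k * dyadic_len j / c1"
  have "c1 * (2 powr (k + 1) * dyadic_len j) = 2 * c1\<^sup>2 * a"
    using c1_pos by (simp add: a_def powr_add power2_eq_square field_simps)
  moreover have "1 \<le> c1\<^sup>2" using c1_gt_1 by (intro one_le_power) simp
  then have "1 \<le> 2 * c1\<^sup>2" by linarith
  moreover have "0 < a" using c1_pos by (simp add: a_def)
  ultimately show ?thesis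
    using enlarge_radius_pos
    unfolding enlarged_cube_def a_def[symmetric]
    by (simp add: emeasure_lebesgue_Times emeasure_lborel_box_cart algebra_simps ennreal_mult'[symmetric])
qed

definition enlarged_const :: "nat \<Rightarrow> real" where
  "enlarged_const n = (2 * c1\<^sup>2 - 1) * (1 + 2 * enlarge_radius) ^ n"

lemma enlarged_const_pos: "0 < enlarged_const n"
proof -
  have "1 < c1\<^sup>2" using c1_gt_1 by (simp add: less_1_mult power2_eq_square)
  then show ?thesis using enlarge_radius_pos by (simp add: enlarged_const_def)
qed

lemma nn_integral_enlarged_cube_le:
  "(\<integral>\<^sup>+ z. indicator (enlarged_cube j m) z / ennreal (fst z) \<partial>(lebesgue :: (real \<times> (real^'n)) measure))
    \<le> ennreal (enlarged_const CARD('n) * dyadic_len j ^ CARD('n))"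
proof -
  define a where "a = 2 powr k * dyadic_len j / c1"
  have "0 < a" using c1_pos by (simp add: a_def)
  have "indicator (enlarged_cube j m) z / ennreal (fst z) \<le> ennreal (1 / a) * indicator (enlarged_cube j m) z"
    for z :: "real \<times> (real^'n)"
  proof (cases "z \<in> enlarged_cube j m")
    case True
    then have "a < fst z" by (auto simp: enlarged_cube_def a_def)
    then show ?thesis
      using True \<open>0 < a\<close> divide_ennreal[of 1 "fst z"] by (simp add: ennreal_leI frac_le)
  qed simp
  then have "(\<integral>\<^sup>+ z. indicator (enlarged_cube j m) z / ennreal (fst z) \<partial>(lebesgue :: (real \<times> (real^'n)) measure))
      \<le> ennreal (1 / a) * emeasure lebesgue (enlarged_cube j m :: (real \<times> (real^'n)) set)"
    by (simp add: nn_integral_mono nn_integral_cmult_indicator[OF enlarged_cube_in_sets, symmetric])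
  also have "\<dots> = ennreal (1 / a) * ennreal ((2 * c1\<^sup>2 - 1) * a * (dyadic_len j * (1 + 2 * enlarge_radius)) ^ CARD('n))"
    by (simp add: emeasure_enlarged_cube a_def)
  also have "\<dots> = ennreal (enlarged_const CARD('n) * dyadic_len j ^ CARD('n))"
    using \<open>0 < a\<close> by (simp add: ennreal_mult'[symmetric] enlarged_const_def power_mult_distrib mult_ac)
  finally show ?thesis .
qed

lemma Z_integral_le_dyadic_sum:
  fixes f :: "real \<times> (real^'n) \<Rightarrow> complex^'m"
  assumes f: "f \<in> borel_measurable lebesgue"
  shows "(\<integral>\<^sup>+ z. Z_density p s c0 c1 f z \<partial>lebesgue)
    \<le> ennreal (upper_const CARD('n) * enlarged_const CARD('n))
        * (\<integral>\<^sup>+ q. ennreal (dyadic_len (fst q) ^ CARD('n)) * cube_term p s k f q \<partial>count_space UNIV)"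
proof -
  define U where "U = ennreal (upper_const CARD('n))"
  have meas1: "(\<lambda>z. indicator (enlarged_cube j m) z / ennreal (fst z)) \<in> borel_measurable lebesgue"
    for j and m :: "int^'n"
    using enlarged_cube_in_sets[of j m] by measurable
  have meas2: "(\<lambda>z. d * (indicator (enlarged_cube j m) z / ennreal (fst z))) \<in> borel_measurable lebesgue"
    "(\<lambda>z. c * (d * (indicator (enlarged_cube j m) z / ennreal (fst z)))) \<in> borel_measurable lebesgue"
    for c d j and m :: "int^'n"
    by (intro borel_measurable_times_ennreal borel_measurable_const meas1)+
  have "(\<integral>\<^sup>+ z. Z_density p s c0 c1 f z \<partial>lebesgue)
      \<le> (\<integral>\<^sup>+ z. (\<integral>\<^sup>+ q. U * (cube_term p s k f q
             * (indicator (enlarged_cube (fst q) (snd q)) z / ennreal (fst z))) \<partial>count_space UNIV) \<partial>lebesgue)"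
    using Z_density_le[OF f] by (intro nn_integral_mono) (simp add: U_def nn_integral_cmult)
  also have "\<dots> = (\<integral>\<^sup>+ q. U * (cube_term p s k f q
      * (\<integral>\<^sup>+ z. indicator (enlarged_cube (fst q) (snd q)) z / ennreal (fst z) \<partial>lebesgue)) \<partial>count_space UNIV)"
    by (subst nn_integral_count_space_nn_integral) (simp_all add: meas1 meas2 nn_integral_cmult)
  also have "\<dots> \<le> (\<integral>\<^sup>+ q. U * (cube_term p s k f q
      * ennreal (enlarged_const CARD('n) * dyadic_len (fst q) ^ CARD('n))) \<partial>count_space UNIV)"
    by (intro nn_integral_mono mult_left_mono nn_integral_enlarged_cube_le) auto
  also have "\<dots> = ennreal (upper_const CARD('n) * enlarged_const CARD('n))
      * (\<integral>\<^sup>+ q. ennreal (dyadic_len (fst q) ^ CARD('n)) * cube_term p s k f q \<partial>count_space UNIV)"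
  proof -
    have "U * (cube_term p s k f q * ennreal (enlarged_const CARD('n) * dyadic_len (fst q) ^ CARD('n)))
        = ennreal (upper_const CARD('n) * enlarged_const CARD('n))
          * (ennreal (dyadic_len (fst q) ^ CARD('n)) * cube_term p s k f q)" for q :: "int \<times> (int^'n)"
      using enlarged_const_pos[of "CARD('n)"] by (simp add: U_def ennreal_mult upper_const_def mult_ac)
    then show ?thesis by (simp add: nn_integral_cmult)
  qed
  finally show ?thesis .
qed

section \<open>The dyadic sum is bounded by the Z-norm\<close>

text \<open>For heights t between probe_low and probe_high times dyadic_len j, the Whitney region at
  height t contains the whole time band of the Whitney cubes of generation j (this needs
  c1^2 > 2); probe_high \<le> 2 probe_low makes these height bands disjoint for different j.\<close>
definition probe_low :: real where
  "probe_low = 2 powr (k + 1) / c1"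

definition probe_high :: real where
  "probe_high = min (c1 * 2 powr k) (2 * probe_low)"

lemma probe_low_pos: "0 < probe_low"
  using c1_pos by (simp add: probe_low_def)

lemma probe_low_less_high: "probe_low < probe_high"
proof -
  have "(3/2) * (3/2) < c1 * c1" using c1_gt by (intro mult_strict_mono) auto
  then have "2 * 2 powr k < (c1 * c1) * 2 powr k" by (intro mult_strict_right_mono) auto
  then have "2 powr (k + 1) / c1 < c1 * 2 powr k"
    using c1_pos by (simp add: powr_add divide_less_eq mult_ac)
  then show ?thesis using probe_low_pos by (simp add: probe_high_def probe_low_def)
qed

lemma probe_high_pos: "0 < probe_high"
  using probe_low_pos probe_low_less_high by simp

text \<open>Pieces are dyadic subcubes 2^depth times smaller than their Whitney cube; depth is chosen
  so that their l1-diameter stays below c0 times the lowest probe height, hence a piece fits into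
  the ball of the Whitney region at every point of its probe set.\<close>
definition depth :: "nat \<Rightarrow> nat" where
  "depth n = (LEAST M. real n < c0 * probe_low * 2 ^ M)"

lemma depth_bound: "real n < c0 * probe_low * 2 ^ depth n"
proof -
  obtain M :: nat where "real n / (c0 * probe_low) < 2 ^ M"
    using real_arch_pow[of 2 "real n / (c0 * probe_low)"] by auto
  then have "real n < c0 * probe_low * 2 ^ M"
    using c0_pos probe_low_pos by (simp add: divide_less_eq mult.commute)
  then show ?thesis unfolding depth_def by (rule LeastI)
qed

definition probe_set :: "int \<Rightarrow> int^'n \<Rightarrow> (real \<times> (real^'n)) set" where
  "probe_set j m = {probe_low * dyadic_len j <..< probe_high * dyadic_len j}
     \<times> dyadic_cube (j - int (depth CARD('n))) m"

definition piece :: "int \<Rightarrow> int^'n \<Rightarrow> (real \<times> (real^'n)) set" where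
  "piece j m = {2 powr k * dyadic_len j <..< 2 powr (k + 1) * dyadic_len j} \<times>
     cbox (\<chi> i. dyadic_len (j - int (depth CARD('n))) * of_int (m$i))
          (\<chi> i. dyadic_len (j - int (depth CARD('n))) * (of_int (m$i) + 1))"

definition children :: "(int^'n) set" where
  "children = {c. \<forall>i. c$i \<in> {0..<2 ^ depth CARD('n)}}"

definition child :: "int^'n \<Rightarrow> int^'n \<Rightarrow> int^'n" where
  "child m c = (\<chi> i. 2 ^ depth CARD('n) * m$i + c$i)"

lemma probe_set_fst_pos: "z \<in> probe_set j m \<Longrightarrow> 0 < fst z"
  using mult_pos_pos[OF probe_low_pos dyadic_len_pos[of j]] by (auto simp: probe_set_def)

lemma piece_fst_pos:
  assumes "w \<in> piece j m"
  shows "0 < fst w"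
proof -
  have "2 powr k * dyadic_len j < fst w" using assms by (auto simp: piece_def)
  moreover have "0 < 2 powr k * dyadic_len j" by simp
  ultimately show ?thesis by linarith
qed

lemma probe_set_in_sets: "probe_set j m \<in> sets lebesgue"
  by (auto simp: probe_set_def dyadic_cube_def dyadic_len_def mem_box_cart
      intro!: Times_in_sets_lebesgue open_Collect_less continuous_intros)

lemma piece_in_sets: "piece j m \<in> sets lebesgue"
  unfolding piece_def by (intro Times_in_sets_lebesgue) auto

lemma finite_card_children:
  "finite (children :: (int^'n) set) \<and> card (children :: (int^'n) set) \<le> (2 ^ depth CARD('n)) ^ CARD('n)"
  unfolding children_def by (intro finite_card_vec_le) (simp_all add: nat_power_eq)

lemma inj_child: "inj (\<lambda>q. (fst q, child (snd q) c))"
  by (auto simp: inj_def child_def vec_eq_iff prod_eq_iff)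

lemma whitney_cube_subset_pieces:
  fixes m :: "int^'n"
  shows "whitney_cube k j m \<subseteq> (\<Union>c\<in>children. piece j (child m c))"
proof
  fix w assume w: "w \<in> whitney_cube k j m"
  define h where "h = dyadic_len (j - int (depth CARD('n)))"
  have "0 < h" by (simp add: h_def)
  have l: "dyadic_len j = h * 2 ^ depth CARD('n)" by (simp add: h_def dyadic_len_diff)
  define m' :: "int^'n" where "m' = (\<chi> i. \<lfloor>snd w $ i / h\<rfloor>)"
  have m': "h * of_int (m'$i) \<le> snd w $ i" "snd w $ i < h * (of_int (m'$i) + 1)" for i
    using floor_divide_cell[OF \<open>0 < h\<close>, of "snd w $ i"] by (simp_all add: m'_def)
  define c :: "int^'n" where "c = (\<chi> i. m'$i - 2 ^ depth CARD('n) * m$i)"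
  have cube: "h * 2 ^ depth CARD('n) * of_int (m$i) < snd w $ i"
    "snd w $ i < h * 2 ^ depth CARD('n) * (of_int (m$i) + 1)" for i
    using w by (auto simp: whitney_cube_def dyadic_cube_def l[unfolded dyadic_len_def])
  have "c $ i \<in> {0..<2 ^ depth CARD('n)}" for i
    using refined_index_bounds[OF \<open>0 < h\<close> cube[of i] m'[of i]] by (simp add: c_def)
  then have "c \<in> children" by (simp add: children_def)
  moreover have "w \<in> piece j (child m c)"
    using w m' by (auto simp: piece_def whitney_cube_def child_def c_def mem_box_cart h_def less_imp_le)
  ultimately show "w \<in> (\<Union>c\<in>children. piece j (child m c))" by blast
qed

definition piece_sq :: "(real \<times> (real^'n) \<Rightarrow> complex^'m) \<Rightarrow> int \<Rightarrow> int^'n \<Rightarrow> ennreal" where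
  "piece_sq f j m = (\<integral>\<^sup>+ w. cube_density f w * indicator (piece j m) w \<partial>lebesgue)"

lemma cube_sq_le_sum_piece_sq:
  fixes f :: "real \<times> (real^'n) \<Rightarrow> complex^'m"
  assumes f: "f \<in> borel_measurable lebesgue"
  shows "cube_sq k j m f \<le> (\<Sum>c\<in>children. piece_sq f j (child m c))"
proof -
  have "cube_density f w * indicator (whitney_cube k j m) w
      \<le> (\<Sum>c\<in>children. cube_density f w * indicator (piece j (child m c)) w)" for w
  proof (cases "w \<in> whitney_cube k j m")
    case True
    then obtain c where "c \<in> children" "w \<in> piece j (child m c)"
      using whitney_cube_subset_pieces by blast
    then show ?thesis
      using finite_card_children
      by (auto intro: order_trans[OF _ member_le_sum[of c]] simp: indicator_def)
  qed simp
  then have "cube_sq k j m f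
      \<le> (\<integral>\<^sup>+ w. (\<Sum>c\<in>children. cube_density f w * indicator (piece j (child m c)) w) \<partial>lebesgue)"
    unfolding cube_sq_eq by (rule nn_integral_mono)
  also have "\<dots> = (\<Sum>c\<in>children. piece_sq f j (child m c))"
    unfolding piece_sq_def
    by (intro nn_integral_sum borel_measurable_times_ennreal borel_measurable_cube_density[OF f]
        borel_measurable_indicator piece_in_sets)
  finally show ?thesis .
qed

lemma piece_subset_whitney_region:
  fixes m :: "int^'n"
  assumes z: "z \<in> probe_set j m"
  shows "piece j m \<subseteq> whitney_region c0 c1 (fst z) (snd z)"
proof
  fix w assume w: "w \<in> piece j m"
  define l h where "l = dyadic_len j" and "h = dyadic_len (j - int (depth CARD('n)))"
  from z have t: "probe_low * l < fst z" "fst z < probe_high * l"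
    and x: "\<And>i. h * of_int (m$i) < snd z $ i \<and> snd z $ i < h * (of_int (m$i) + 1)"
    by (auto simp: probe_set_def dyadic_cube_def l_def h_def dyadic_len_def)
  from w have \<tau>: "2 powr k * l < fst w" "fst w < 2 powr (k + 1) * l"
    and \<xi>: "\<And>i. h * of_int (m$i) \<le> snd w $ i \<and> snd w $ i \<le> h * (of_int (m$i) + 1)"
    by (auto simp: piece_def mem_box_cart l_def h_def)
  have "probe_high * l \<le> c1 * 2 powr k * l"
    by (intro mult_right_mono) (simp_all add: probe_high_def l_def)
  then have "fst z < c1 * (2 powr k * l)" using t(2) by (simp add: mult.assoc)
  also have "c1 * (2 powr k * l) < c1 * fst w" using \<tau>(1) c1_pos by simp
  finally have "fst z / c1 < fst w" using c1_pos by (simp add: divide_less_eq mult.commute)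
  moreover have "fst w < c1 * fst z"
    using \<tau>(2) t(1) c1_pos by (simp add: probe_low_def field_simps)
  moreover have "dist (snd z) (snd w) < c0 * fst z"
  proof -
    have "dist (snd z) (snd w) \<le> (\<Sum>i\<in>UNIV. \<bar>(snd z - snd w) $ i\<bar>)"
      unfolding dist_norm by (rule norm_le_l1_cart)
    also have "\<dots> \<le> (\<Sum>i\<in>(UNIV::'n set). h)"
    proof (rule sum_mono)
      fix i
      have "h * (of_int (m$i) + 1) = h * of_int (m$i) + h" by (simp add: algebra_simps)
      with x[of i] \<xi>[of i] have "h * of_int (m$i) < snd z $ i" "snd z $ i < h * of_int (m$i) + h"
        "h * of_int (m$i) \<le> snd w $ i" "snd w $ i \<le> h * of_int (m$i) + h" by auto
      then show "\<bar>(snd z - snd w) $ i\<bar> \<le> h" by (auto simp: abs_le_iff)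
    qed
    also have "\<dots> = real CARD('n) * h" by simp
    also have "\<dots> < c0 * probe_low * 2 ^ depth CARD('n) * h"
      using depth_bound[of "CARD('n)"] by (simp add: h_def)
    also have "\<dots> = c0 * (probe_low * l)" by (simp add: h_def l_def dyadic_len_diff)
    also have "\<dots> < c0 * fst z" using t(1) c0_pos by simp
    finally show ?thesis .
  qed
  ultimately show "w \<in> whitney_region c0 c1 (fst z) (snd z)"
    by (cases w) (simp add: whitney_region_def dist_commute)
qed

lemma height_pow_le_on_piece:
  assumes w: "w \<in> piece j m" and "0 < t" "t < probe_high * dyadic_len j"
  shows "t ^ (n + 1) \<le> band_max (2 * s) * (probe_high / 2 powr k) ^ (n + 1) * dyadic_len j powr (2 * s)
                          * fst w powr (- 2 * s) * fst w ^ (n + 1)"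
proof -
  define l where "l = dyadic_len j"
  from w have band: "2 powr k * l < fst w" "fst w < 2 powr (k + 1) * l"
    by (auto simp: piece_def l_def)
  have "0 < fst w" using piece_fst_pos[OF w] .
  have "1 = fst w powr (2 * s) * fst w powr (- 2 * s)"
    using \<open>0 < fst w\<close> by (simp flip: powr_add)
  also have "\<dots> \<le> band_max (2 * s) * l powr (2 * s) * fst w powr (- 2 * s)"
    using band by (intro mult_right_mono powr_le_band_max) (simp_all add: l_def)
  finally have 1: "1 \<le> band_max (2 * s) * l powr (2 * s) * fst w powr (- 2 * s)" .
  have "t ^ (n + 1) \<le> ((probe_high / 2 powr k) * (2 powr k * l)) ^ (n + 1)"
    using assms(2,3) by (intro power_mono) (simp_all add: l_def)
  also have "\<dots> = (probe_high / 2 powr k) ^ (n + 1) * (2 powr k * l) ^ (n + 1)"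
    by (rule power_mult_distrib)
  also have "\<dots> \<le> (probe_high / 2 powr k) ^ (n + 1) * fst w ^ (n + 1)"
    using band probe_high_pos by (intro mult_left_mono power_mono) (auto simp: l_def)
  also have "\<dots> \<le> (band_max (2 * s) * l powr (2 * s) * fst w powr (- 2 * s))
      * ((probe_high / 2 powr k) ^ (n + 1) * fst w ^ (n + 1))"
    using mult_right_mono[OF 1, of "(probe_high / 2 powr k) ^ (n + 1) * fst w ^ (n + 1)"]
      probe_high_pos \<open>0 < fst w\<close> by simp
  also have "\<dots> = band_max (2 * s) * (probe_high / 2 powr k) ^ (n + 1) * dyadic_len j powr (2 * s)
      * fst w powr (- 2 * s) * fst w ^ (n + 1)"
    by (simp add: l_def mult_ac)
  finally show ?thesis .
qed

definition lower_weight :: "nat \<Rightarrow> real" where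
  "lower_weight n = band_max (2 * s) * (probe_high / 2 powr k) ^ (n + 1) * whitney_vol c0 c1 n"

lemma lower_weight_pos: "0 < lower_weight n"
  using band_max_pos probe_high_pos whitney_vol_pos[OF c0_pos c1_gt_1]
  by (simp add: lower_weight_def)

lemma cube_density_le_kappa_sq:
  fixes f :: "real \<times> (real^'n) \<Rightarrow> complex^'m"
  assumes z: "z \<in> probe_set j m" and w: "w \<in> piece j m"
  defines "V \<equiv> whitney_vol c0 c1 CARD('n) * fst z ^ (CARD('n) + 1)"
  shows "cube_density f w \<le> ennreal (lower_weight CARD('n) * dyadic_len j powr (2 * s) / V)
                              * ennreal ((norm (kappa (- s) f w))\<^sup>2)"
proof -
  define n C where "n = CARD('n)"
    and "C = band_max (2 * s) * (probe_high / 2 powr k) ^ (n + 1) * dyadic_len j powr (2 * s)"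
  from z have t: "probe_low * dyadic_len j < fst z" "fst z < probe_high * dyadic_len j"
    by (auto simp: probe_set_def)
  have "0 < fst z" "0 < fst w" using probe_set_fst_pos[OF z] piece_fst_pos[OF w] .
  have "fst z ^ (n + 1) * (norm (f w))\<^sup>2 \<le> C * fst w powr (- 2 * s) * fst w ^ (n + 1) * (norm (f w))\<^sup>2"
    using mult_right_mono[OF height_pow_le_on_piece[OF w \<open>0 < fst z\<close> t(2), of n], of "(norm (f w))\<^sup>2"]
    by (simp only: C_def) simp
  then have 1: "(norm (f w))\<^sup>2 / fst w ^ (1 + n) \<le> C / fst z ^ (n + 1) * (fst w powr (- 2 * s) * (norm (f w))\<^sup>2)"
    using \<open>0 < fst z\<close> \<open>0 < fst w\<close> by (simp add: field_simps)
  have 2: "C / fst z ^ (n + 1) = lower_weight n * dyadic_len j powr (2 * s) / V"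
    using whitney_vol_pos[OF c0_pos c1_gt_1, of n] by (simp add: C_def V_def n_def lower_weight_def)
  have 3: "(norm (kappa (- s) f w))\<^sup>2 = fst w powr (- 2 * s) * (norm (f w))\<^sup>2"
    using norm_kappa_sq[OF \<open>0 < fst w\<close>, of "- s" f] by simp
  have "(norm (f w))\<^sup>2 / fst w ^ (1 + n)
      \<le> lower_weight n * dyadic_len j powr (2 * s) / V * (norm (kappa (- s) f w))\<^sup>2"
    using 1 unfolding 2 3 .
  moreover have "0 \<le> lower_weight n * dyadic_len j powr (2 * s) / V"
    using lower_weight_pos[of n] whitney_vol_pos[OF c0_pos c1_gt_1, of n] \<open>0 < fst z\<close> by (simp add: V_def n_def)
  ultimately show ?thesis
    unfolding cube_density_def n_def by (simp add: ennreal_mult'[symmetric] ennreal_leI del: ennreal_mult')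
qed

lemma piece_sq_le_whitney_sq:
  fixes f :: "real \<times> (real^'n) \<Rightarrow> complex^'m"
  assumes f: "f \<in> borel_measurable lebesgue" and z: "z \<in> probe_set j m"
  shows "piece_sq f j m \<le> ennreal (lower_weight CARD('n) * dyadic_len j powr (2 * s))
                             * whitney_sq c0 c1 (kappa (- s) f) z"
proof -
  define A V \<Omega> where "A = lower_weight CARD('n) * dyadic_len j powr (2 * s)"
    and "V = whitney_vol c0 c1 CARD('n) * fst z ^ (CARD('n) + 1)"
    and "\<Omega> = whitney_region c0 c1 (fst z) (snd z)"
  have "0 < fst z" using probe_set_fst_pos[OF z] .
  then have "0 < V" using whitney_vol_pos[OF c0_pos c1_gt_1] by (simp add: V_def)
  have "cube_density f w * indicator (piece j m) w
      \<le> ennreal (A / V) * (ennreal ((norm (kappa (- s) f w))\<^sup>2) * indicator \<Omega> w)" for w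
    using cube_density_le_kappa_sq[OF z, of w f] piece_subset_whitney_region[OF z]
    by (auto simp: A_def V_def \<Omega>_def split: split_indicator)
  then have "piece_sq f j m \<le> (\<integral>\<^sup>+ w. ennreal (A / V) * (ennreal ((norm (kappa (- s) f w))\<^sup>2) * indicator \<Omega> w) \<partial>lebesgue)"
    unfolding piece_sq_def by (rule nn_integral_mono)
  also have "\<dots> = ennreal (A / V) * (\<integral>\<^sup>+ w. ennreal ((norm (kappa (- s) f w))\<^sup>2) * indicator \<Omega> w \<partial>lebesgue)"
    by (intro nn_integral_cmult borel_measurable_times_ennreal borel_measurable_kappa_sq[OF f]
        borel_measurable_indicator) (simp add: \<Omega>_def whitney_region_in_sets)
  also have "\<dots> = ennreal A * ((\<integral>\<^sup>+ w. ennreal ((norm (kappa (- s) f w))\<^sup>2) * indicator \<Omega> w \<partial>lebesgue) / ennreal V)"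
    using \<open>0 < V\<close> lower_weight_pos[of "CARD('n)"]
    by (simp add: A_def divide_ennreal[symmetric] divide_ennreal_def mult_ac)
  also have "\<dots> = ennreal A * whitney_sq c0 c1 (kappa (- s) f) z"
    using whitney_sq_eq[OF \<open>0 < fst z\<close> c0_pos c1_gt_1, of "kappa (- s) f" "snd z"]
    by (simp add: V_def \<Omega>_def)
  finally show ?thesis by (simp add: A_def)
qed

lemma probe_sets_disjoint:
  assumes "z \<in> probe_set j m" "z \<in> probe_set j' m'"
  shows "j = j' \<and> m = m'"
proof -
  have "j \<le> j'" if "z \<in> probe_set j m" "z \<in> probe_set j' m'" for j j' m m'
  proof (rule ccontr)
    assume "\<not> j \<le> j'"
    then have "2 powr (j' + 1) \<le> 2 powr j" by (intro powr_mono) auto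
    then have "probe_high * dyadic_len j' \<le> probe_low * dyadic_len j"
      using probe_low_pos
      by (auto simp: dyadic_len_def probe_high_def powr_add intro!: order_trans[OF mult_right_mono[OF min.cobounded2]])
    with that show False by (auto simp: probe_set_def)
  qed
  from this[OF assms] this[OF assms(2) assms(1)] have "j = j'" by simp
  with assms show ?thesis by (auto simp: probe_set_def intro: dyadic_cube_unique)
qed

lemma emeasure_probe_set:
  "emeasure lebesgue (probe_set j m :: (real \<times> (real^'n)) set)
    = ennreal ((probe_high - probe_low) * dyadic_len j * dyadic_len (j - int (depth CARD('n))) ^ CARD('n))"
  using probe_low_less_high
  by (simp add: probe_set_def emeasure_lebesgue_Times dyadic_cube_in_sets_borel emeasure_dyadic_cube
      ennreal_mult'[symmetric] algebra_simps)

definition probe_const :: "nat \<Rightarrow> real" where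
  "probe_const n = probe_high * (2 ^ depth n) ^ n / (probe_high - probe_low)"

lemma probe_const_pos: "0 < probe_const n"
  using probe_low_less_high probe_high_pos by (simp add: probe_const_def)

lemma dyadic_len_pow_le_nn_integral_probe_set:
  "ennreal (dyadic_len j ^ CARD('n))
    \<le> ennreal (probe_const CARD('n)) * (\<integral>\<^sup>+ z. indicator (probe_set j (m :: int^'n)) z / ennreal (fst z) \<partial>lebesgue)"
proof -
  define a where "a = probe_high * dyadic_len j"
  have "0 < a" using probe_high_pos by (simp add: a_def)
  have "ennreal (1 / a) * indicator (probe_set j m) z \<le> indicator (probe_set j m) z / ennreal (fst z)"
    for z :: "real \<times> (real^'n)"
  proof (cases "z \<in> probe_set j m")
    case True
    then have "fst z < a" "0 < fst z"
      using probe_set_fst_pos[of z j m] by (auto simp: probe_set_def a_def)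
    then show ?thesis
      using True divide_ennreal[of 1 "fst z"] by (simp add: ennreal_leI frac_le)
  qed simp
  then have "ennreal (1 / a) * emeasure lebesgue (probe_set j m)
      \<le> (\<integral>\<^sup>+ z. indicator (probe_set j m) z / ennreal (fst z) \<partial>lebesgue)"
    by (simp add: nn_integral_mono nn_integral_cmult_indicator[OF probe_set_in_sets, symmetric])
  then have "ennreal (probe_const CARD('n)) * (ennreal (1 / a) * emeasure lebesgue (probe_set j m))
      \<le> ennreal (probe_const CARD('n)) * (\<integral>\<^sup>+ z. indicator (probe_set j m) z / ennreal (fst z) \<partial>lebesgue)"
    by (rule mult_left_mono) simp
  moreover have "ennreal (probe_const CARD('n)) * (ennreal (1 / a) * emeasure lebesgue (probe_set j m))
      = ennreal (dyadic_len j ^ CARD('n))"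
  proof -
    have "probe_const CARD('n) * (1 / a * ((probe_high - probe_low) * dyadic_len j
        * (dyadic_len j / 2 ^ depth CARD('n)) ^ CARD('n))) = dyadic_len j ^ CARD('n)"
      using probe_low_less_high probe_high_pos
      by (simp add: probe_const_def a_def power_divide field_simps)
    then show ?thesis
      using \<open>0 < a\<close> probe_const_pos[of "CARD('n)"] probe_low_less_high
      by (simp add: emeasure_probe_set dyadic_len_diff ennreal_mult'[symmetric] del: ennreal_mult')
  qed
  ultimately show ?thesis by simp
qed

definition piece_term :: "(real \<times> (real^'n) \<Rightarrow> complex^'m) \<Rightarrow> int \<times> (int^'n) \<Rightarrow> ennreal" where
  "piece_term f q = ennreal (dyadic_len (fst q) powr (- s * p) * lower_weight CARD('n) powr (- p / 2))
     * epowr (piece_sq f (fst q) (snd q)) (p / 2)"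

lemma cube_term_le_sum_piece_terms:
  fixes f :: "real \<times> (real^'n) \<Rightarrow> complex^'m"
  assumes f: "f \<in> borel_measurable lebesgue"
  shows "cube_term p s k f (j, m)
    \<le> ennreal ((real ((2 ^ depth CARD('n)) ^ CARD('n)) * lower_weight CARD('n)) powr (p / 2))
        * (\<Sum>c\<in>children. piece_term f (j, child m c))"
proof -
  define N w where "N = real ((2 ^ depth CARD('n)) ^ CARD('n))" and "w = lower_weight CARD('n)"
  have "0 < p / 2" "0 < w" using p_pos lower_weight_pos by (simp_all add: w_def)
  have "epowr (cube_sq k j m f) (p / 2) \<le> epowr (\<Sum>c\<in>children. piece_sq f j (child m c)) (p / 2)"
    using \<open>0 < p / 2\<close> by (intro epowr_mono cube_sq_le_sum_piece_sq f) simp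
  also have "\<dots> \<le> ennreal (N powr (p / 2)) * (\<Sum>c\<in>children. epowr (piece_sq f j (child m c)) (p / 2))"
    using finite_card_children \<open>0 < p / 2\<close> unfolding N_def by (intro epowr_sum_le) auto
  finally have "cube_term p s k f (j, m) \<le> ennreal (dyadic_len j powr (- s * p))
      * (ennreal (N powr (p / 2)) * (\<Sum>c\<in>children. epowr (piece_sq f j (child m c)) (p / 2)))"
    unfolding cube_term_def by (simp add: mult_left_mono)
  also have "\<dots> = ennreal ((N * w) powr (p / 2)) * (\<Sum>c\<in>children. piece_term f (j, child m c))"
  proof -
    have "dyadic_len j powr (- s * p) * N powr (p / 2)
        = (N * w) powr (p / 2) * (dyadic_len j powr (- s * p) * w powr (- p / 2))"
      using \<open>0 < w\<close> by (simp add: powr_mult powr_minus field_simps)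
    then show ?thesis
      using \<open>0 < w\<close> by (simp add: piece_term_def w_def sum_distrib_left ennreal_mult' mult_ac)
  qed
  finally show ?thesis by (simp add: N_def w_def)
qed

lemma piece_term_le_epowr_whitney_sq:
  fixes f :: "real \<times> (real^'n) \<Rightarrow> complex^'m"
  assumes f: "f \<in> borel_measurable lebesgue" and z: "z \<in> probe_set j m"
  shows "piece_term f (j, m) \<le> epowr (whitney_sq c0 c1 (kappa (- s) f) z) (p / 2)"
proof -
  define l w where "l = dyadic_len j" and "w = lower_weight CARD('n)"
  have "0 < p / 2" "0 < w" using p_pos lower_weight_pos by (simp_all add: w_def)
  have "0 < w * l powr (2 * s)" using \<open>0 < w\<close> by (simp add: l_def)
  from epowr_le_ennreal_mult[OF piece_sq_le_whitney_sq[OF f z] this[unfolded l_def w_def] \<open>0 < p / 2\<close>]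
  have "epowr (piece_sq f j m) (p / 2) \<le> ennreal ((w * l powr (2 * s)) powr (p / 2))
      * epowr (whitney_sq c0 c1 (kappa (- s) f) z) (p / 2)"
    by (simp add: l_def w_def)
  then have "piece_term f (j, m) \<le> ennreal (l powr (- s * p) * w powr (- p / 2) * (w * l powr (2 * s)) powr (p / 2))
      * epowr (whitney_sq c0 c1 (kappa (- s) f) z) (p / 2)"
    unfolding piece_term_def by (simp add: l_def w_def ennreal_mult mult.assoc mult_left_mono)
  also have "l powr (- s * p) * w powr (- p / 2) * (w * l powr (2 * s)) powr (p / 2)
      = (l powr (- s * p) * l powr (s * p)) * (w powr (- p / 2) * w powr (p / 2))"
    using \<open>0 < w\<close> by (simp add: l_def powr_mult powr_powr mult_ac)
  also have "\<dots> = 1"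
    using \<open>0 < w\<close> by (simp add: l_def flip: powr_add)
  finally show ?thesis by simp
qed

lemma nn_integral_piece_terms_at_le_Z_density:
  fixes f :: "real \<times> (real^'n) \<Rightarrow> complex^'m" and z :: "real \<times> (real^'n)"
  assumes f: "f \<in> borel_measurable lebesgue"
  shows "(\<integral>\<^sup>+ q. piece_term f q * (indicator (probe_set (fst q) (snd q)) z / ennreal (fst z)) \<partial>count_space UNIV)
    \<le> Z_density p s c0 c1 f z"
proof (cases "\<exists>q. z \<in> probe_set (fst q) (snd q)")
  case True
  then obtain j m where z: "z \<in> probe_set j m" by auto
  then have "0 < fst z" by (rule probe_set_fst_pos)
  have "(\<integral>\<^sup>+ q. piece_term f q * (indicator (probe_set (fst q) (snd q)) z / ennreal (fst z)) \<partial>count_space UNIV)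
      = piece_term f (j, m) / ennreal (fst z)"
  proof (subst nn_integral_count_space'[where A = "{(j, m)}"])
    fix q :: "int \<times> (int^'n)"
    assume "q \<notin> {(j, m)}"
    then have "z \<notin> probe_set (fst q) (snd q)"
      using probe_sets_disjoint[OF z] by (cases q) auto
    then show "piece_term f q * (indicator (probe_set (fst q) (snd q)) z / ennreal (fst z)) = 0"
      by simp
  qed (use z in \<open>simp_all add: ennreal_times_divide\<close>)
  also have "\<dots> \<le> epowr (whitney_sq c0 c1 (kappa (- s) f) z) (p / 2) / ennreal (fst z)"
    by (intro divide_right_mono_ennreal piece_term_le_epowr_whitney_sq f z)
  also have "\<dots> = Z_density p s c0 c1 f z"
    using \<open>0 < fst z\<close> by (simp add: Z_density_def upper_half_def)
  finally show ?thesis .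
qed simp

lemma nn_integral_piece_terms_le_Z_integral:
  fixes f :: "real \<times> (real^'n) \<Rightarrow> complex^'m"
  assumes f: "f \<in> borel_measurable lebesgue"
  shows "(\<integral>\<^sup>+ q. ennreal (dyadic_len (fst q) ^ CARD('n)) * piece_term f q \<partial>count_space UNIV)
    \<le> ennreal (probe_const CARD('n)) * (\<integral>\<^sup>+ z. Z_density p s c0 c1 f z \<partial>lebesgue)"
proof -
  define P where "P = ennreal (probe_const CARD('n))"
  have meas: "(\<lambda>z. indicator (probe_set j m) z / ennreal (fst z)) \<in> borel_measurable lebesgue"
    for j and m :: "int^'n"
    using probe_set_in_sets[of j m] by measurable
  have "ennreal (dyadic_len (fst q) ^ CARD('n)) * piece_term f q
      \<le> P * (\<integral>\<^sup>+ z. piece_term f q * (indicator (probe_set (fst q) (snd q)) z / ennreal (fst z)) \<partial>lebesgue)"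
    for q :: "int \<times> (int^'n)"
    using mult_right_mono[OF dyadic_len_pow_le_nn_integral_probe_set[of "fst q" "snd q"], of "piece_term f q"]
    by (simp add: P_def nn_integral_cmult meas mult_ac)
  then have "(\<integral>\<^sup>+ q. ennreal (dyadic_len (fst q) ^ CARD('n)) * piece_term f q \<partial>count_space UNIV)
      \<le> (\<integral>\<^sup>+ q. P * (\<integral>\<^sup>+ z. piece_term f q * (indicator (probe_set (fst q) (snd q)) z / ennreal (fst z))
             \<partial>lebesgue) \<partial>count_space UNIV)"
    by (rule nn_integral_mono)
  also have "\<dots> = P * (\<integral>\<^sup>+ q. (\<integral>\<^sup>+ z. piece_term f q * (indicator (probe_set (fst q) (snd q)) z / ennreal (fst z))
             \<partial>lebesgue) \<partial>count_space UNIV)"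
    by (rule nn_integral_cmult) simp
  also have "\<dots> = P * (\<integral>\<^sup>+ z. (\<integral>\<^sup>+ q. piece_term f q * (indicator (probe_set (fst q) (snd q)) z
      / ennreal (fst z)) \<partial>count_space UNIV) \<partial>lebesgue)"
    using meas by (subst nn_integral_count_space_nn_integral) (simp_all add: borel_measurable_times_ennreal)
  also have "\<dots> \<le> P * (\<integral>\<^sup>+ z. Z_density p s c0 c1 f z \<partial>lebesgue)"
    by (intro mult_left_mono nn_integral_mono nn_integral_piece_terms_at_le_Z_density f) simp
  finally show ?thesis by (simp add: P_def)
qed

definition lower_const :: "nat \<Rightarrow> real" where
  "lower_const n = real ((2 ^ depth n) ^ n) * (real ((2 ^ depth n) ^ n) * lower_weight n) powr (p / 2) * probe_const n"

lemma lower_const_pos: "0 < lower_const n"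
  using lower_weight_pos[of n] probe_const_pos[of n] by (simp add: lower_const_def)

lemma dyadic_sum_le_Z_integral:
  fixes f :: "real \<times> (real^'n) \<Rightarrow> complex^'m"
  assumes f: "f \<in> borel_measurable lebesgue"
  shows "(\<integral>\<^sup>+ q. ennreal (dyadic_len (fst q) ^ CARD('n)) * cube_term p s k f q \<partial>count_space UNIV)
    \<le> ennreal (lower_const CARD('n)) * (\<integral>\<^sup>+ z. Z_density p s c0 c1 f z \<partial>lebesgue)"
proof -
  define N K where "N = real ((2 ^ depth CARD('n)) ^ CARD('n))"
    and "K = ennreal ((N * lower_weight CARD('n)) powr (p / 2))"
  define G where "G q = ennreal (dyadic_len (fst q) ^ CARD('n)) * piece_term f q" for q :: "int \<times> (int^'n)"
  have "ennreal (dyadic_len (fst q) ^ CARD('n)) * cube_term p s k f q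
      \<le> K * (\<Sum>c\<in>children. G (fst q, child (snd q) c))" for q
  proof -
    have "cube_term p s k f q \<le> K * (\<Sum>c\<in>children. piece_term f (fst q, child (snd q) c))"
      using cube_term_le_sum_piece_terms[OF f, of "fst q" "snd q"] by (simp add: K_def N_def)
    then have "ennreal (dyadic_len (fst q) ^ CARD('n)) * cube_term p s k f q
        \<le> ennreal (dyadic_len (fst q) ^ CARD('n)) * (K * (\<Sum>c\<in>children. piece_term f (fst q, child (snd q) c)))"
      by (rule mult_left_mono) simp
    then show ?thesis by (simp add: G_def sum_distrib_left mult.left_commute)
  qed
  then have "(\<integral>\<^sup>+ q. ennreal (dyadic_len (fst q) ^ CARD('n)) * cube_term p s k f q \<partial>count_space UNIV)
      \<le> (\<integral>\<^sup>+ q. K * (\<Sum>c\<in>children. G (fst q, child (snd q) c)) \<partial>count_space UNIV)"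
    by (rule nn_integral_mono)
  also have "\<dots> = K * (\<Sum>c\<in>children. \<integral>\<^sup>+ q. G (fst q, child (snd q) c) \<partial>count_space UNIV)"
    by (simp add: nn_integral_cmult nn_integral_sum)
  also have "\<dots> \<le> K * (\<Sum>c\<in>(children :: (int^'n) set). \<integral>\<^sup>+ q. G q \<partial>count_space UNIV)"
    using nn_integral_count_space_inj_le[OF inj_child, of G]
    by (intro mult_left_mono sum_mono) simp_all
  also have "\<dots> \<le> K * (ennreal N * \<integral>\<^sup>+ q. G q \<partial>count_space UNIV)"
  proof -
    have "real (card (children :: (int^'n) set)) \<le> N"
      unfolding N_def of_nat_le_iff using finite_card_children[where 'n = 'n] by simp
    then show ?thesis
      by (intro mult_left_mono) (simp_all add: ennreal_of_nat_eq_real_of_nat ennreal_leI mult_right_mono)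
  qed
  also have "\<dots> \<le> K * (ennreal N * (ennreal (probe_const CARD('n)) * (\<integral>\<^sup>+ z. Z_density p s c0 c1 f z \<partial>lebesgue)))"
    unfolding G_def by (intro mult_left_mono nn_integral_piece_terms_le_Z_integral f) simp_all
  also have "\<dots> = ennreal (lower_const CARD('n)) * (\<integral>\<^sup>+ z. Z_density p s c0 c1 f z \<partial>lebesgue)"
    using probe_const_pos[of "CARD('n)"]
    by (simp add: K_def N_def lower_const_def ennreal_mult' mult_ac)
  finally show ?thesis .
qed

end

theorem proposition2p20:
  fixes p s c0 c1 :: real and k :: int
  assumes "0 < p" and "0 < c0" and "3 / 2 < c1"
  shows "\<exists>C :: real. C > 0 \<and>
    (\<forall>f :: real \<times> (real^'n) \<Rightarrow> complex^'m. f \<in> borel_measurable lebesgue \<longrightarrow>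
        Z_norm p s c0 c1 f \<le> ennreal C * dyadic_norm p s k f \<and>
        dyadic_norm p s k f \<le> ennreal C * Z_norm p s c0 c1 f)"
proof -
  interpret whitney_dyadic p s c0 c1 k
    using assms by unfold_locales
  define A B where "A = upper_const CARD('n) * enlarged_const CARD('n)" and "B = lower_const CARD('n)"
  define C where "C = max (A powr (1 / p)) (B powr (1 / p))"
  have "0 < A" "0 < B" "0 < 1 / p"
    using upper_const_pos enlarged_const_pos lower_const_pos p_pos by (simp_all add: A_def B_def)
  have "Z_norm p s c0 c1 f \<le> ennreal C * dyadic_norm p s k f"
    "dyadic_norm p s k f \<le> ennreal C * Z_norm p s c0 c1 f"
    if f: "f \<in> borel_measurable lebesgue" for f :: "real \<times> (real^'n) \<Rightarrow> complex^'m"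
    unfolding Z_norm_eq dyadic_norm_eq
    using epowr_le_ennreal_mult_mono[OF Z_integral_le_dyadic_sum[OF f, folded A_def] \<open>0 < A\<close> \<open>0 < 1 / p\<close>]
      epowr_le_ennreal_mult_mono[OF dyadic_sum_le_Z_integral[OF f, folded B_def] \<open>0 < B\<close> \<open>0 < 1 / p\<close>]
    by (simp_all add: C_def)
  moreover have "0 < C" using \<open>0 < A\<close> by (simp add: C_def less_max_iff_disj)
  ultimately show ?thesis by blast
qed

end
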